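(* Let $\sigma$ be $1$-Lipschitz ($|\sigma(u)-\sigma(u')|\le|u-u'|$ for all $u,u'$) and let $\pi=\mathcal N(0,\rho_1^2\mathbf I_{D_0D_1})\otimes\mathcal N(0,\rho_2^2\mathbf I_{D_1D_2})$ with $\rho_1,\rho_2>0$. Let $\widehat f_n$ be an estimator satisfying the PAC-Bayes bound with prior $\pi$, temperature $\beta>0$ and constant $C_{\mathsf{PB}}>0$. Set $B_\ell=\rho_\ell\sqrt{2D_{\ell-1}D_\ell}$ for $\ell=1,2$. Then $$\Big(C_{\mathsf{PB}}^{-1}\mathbf E_{\mathbf P}\big[\|\widehat f_n-f_{\mathbf P}\|_{\mathbb L_2(\mu)}^2\big]\Big)^{1/2}\le \inf_{\bar w:\ \|\bar w_1\|_F\le B_1,\ \|\bar w_2\|_F\le B_2}\|f_{\bar w}-f_{\mathbf P}\|_{\mathbb L_2(\mu)}+\Big\{\frac{\beta d}{n}\log\Big(3+\frac{nE}{d\beta}\Big)\Big\}^{1/2},$$ where $E=3B_2^2(B_1^2M_2^2+\mu(\mathcal X)M_\sigma^2)$ if $|\sigma(u)|\le M_\sigma$ for all $u$, and $E=3B_1^2B_2^2(M_2^2+\bar M_2^2/D_1)$ if $\sigma$ is unbounded but $\sigma(0)=0$.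
   Context: Let $D_0,D_1,D_2\ge1$, $\mathcal X\subset\mathbb R^{D_0}$ Borel, $\mu$ a $\sigma$-finite measure on $\mathcal X$ with $M_2^2:=D_0^{-1}\int\|x\|_2^2\mu(dx)<\infty$, and $\bar M_2^2:=\|\int xx^\top\mu(dx)\|_{\mathrm{sp}}$. $\mathbb L_2(\mu)$ is the space of $f:\mathcal X\to\mathbb R^{D_2}$ with $\|f\|^2_{\mathbb L_2(\mu)}=\int\|f(x)\|_2^2\mu(dx)<\infty$. Networks: $w=(w_1,w_2)\in\mathsf W=\mathbb R^{D_0\times D_1}\times\mathbb R^{D_1\times D_2}$, $d=D_0D_1+D_1D_2$, $f_w(x)=w_2^\top\bar\sigma(w_1^\top x)$ with $\bar\sigma$ applying $\sigma$ coordinatewise; $\|\cdot\|_F$ is the Frobenius norm. $\mathcal P_1(\mathcal F_{\mathsf W})$ is the set of probability measures $p$ on $\mathsf W$ with $\int\|f_w(x)\|_2p(dw)<\infty$ for all $x$. Data $\mathbf Z^n=(Z_1,\dots,Z_n)$ is drawn from an unknown distribution $\mathbf P$ on $\mathcal Z^n$ ($\mathcal Z$ a measurable space), and $f_{\mathbf P}\in\mathbb L_2(\mu)$ is the target function; $\widehat f_n$ is a measurable function of $\mathbf Z^n$ with values in $\mathbb L_2(\mu)$. It satisfies the PAC-Bayes bound with prior $\pi$, temperature $\beta$ and constant $C_{\mathsf{PB}}$ if $\mathbf E_{\mathbf P}[\|\widehat f_n-f_{\mathbf P}\|^2_{\mathbb L_2(\mu)}]\le C_{\mathsf{PB}}\inf_{p\in\mathcal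 P_1(\mathcal F_{\mathsf W})}\{\int_{\mathsf W}\|f_w-f_{\mathbf P}\|^2_{\mathbb L_2(\mu)}p(dw)+\frac{\beta}{n}D_{\mathrm{KL}}(p\|\pi)\}$. *)

theory Defs
  imports "HOL-Analysis.Analysis" "HOL-Probability.Probability"
begin

text \<open>Two-layer network: weights w = (w1, w2) with w1 a D0 x D1 matrix (rows indexed by 'd0)
  and w2 a D1 x D2 matrix; f_w(x) = w2^T sigma(w1^T x).  Note x v* A = A^T x.\<close>
definition fnet ::
  "(real \<Rightarrow> real) \<Rightarrow> (real^'d1^'d0) \<times> (real^'d2^'d1) \<Rightarrow> real^'d0 \<Rightarrow> real^'d2" where
  "fnet \<sigma> w x = (\<chi> j. \<sigma> ((x v* fst w) $ j)) v* snd w"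

definition L2sq :: "'a measure \<Rightarrow> ('a \<Rightarrow> real^'n) \<Rightarrow> ennreal" where
  "L2sq \<mu> f = (\<integral>\<^sup>+ x. ennreal ((norm (f x))\<^sup>2) \<partial>\<mu>)"

definition L2norm :: "'a measure \<Rightarrow> ('a \<Rightarrow> real^'n) \<Rightarrow> real" where
  "L2norm \<mu> f = sqrt (enn2real (L2sq \<mu> f))"

definition in_L2 :: "'a measure \<Rightarrow> ('a \<Rightarrow> real^'n) \<Rightarrow> bool" where
  "in_L2 \<mu> f \<longleftrightarrow> f \<in> borel_measurable \<mu> \<and> L2sq \<mu> f < \<infinity>"

definition gauss_prior :: "real \<Rightarrow> real \<Rightarrow> ((real^'d1^'d0) \<times> (real^'d2^'d1)) measure" where
  "gauss_prior \<rho>1 \<rho>2 = density lborel (\<lambda>w.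
      ennreal ((\<Prod>i\<in>UNIV. \<Prod>j\<in>UNIV. normal_density 0 \<rho>1 (fst w $ i $ j))
             * (\<Prod>j\<in>UNIV. \<Prod>k\<in>UNIV. normal_density 0 \<rho>2 (snd w $ j $ k))))"

text \<open>KL(p || q) with natural logarithm; finite iff p << q and log(dp/dq) is p-integrable.\<close>
definition KL_finite :: "'a measure \<Rightarrow> 'a measure \<Rightarrow> bool" where
  "KL_finite p q \<longleftrightarrow> absolutely_continuous q p \<and> integrable p (entropy_density (exp 1) q p)"

definition KL :: "'a measure \<Rightarrow> 'a measure \<Rightarrow> real" where
  "KL p q = KL_divergence (exp 1) q p"

definition P1 :: "(real \<Rightarrow> real) \<Rightarrow> (real^'d0) set \<Rightarrow> ((real^'d1^'d0) \<times> (real^'d2^'d1)) measure \<Rightarrow> bool" where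
  "P1 \<sigma> X p \<longleftrightarrow> prob_space p \<and> sets p = sets borel
      \<and> (\<forall>x\<in>X. (\<integral>\<^sup>+ w. ennreal (norm (fnet \<sigma> w x)) \<partial>p) < \<infinity>)"

definition risk :: "'z measure \<Rightarrow> 'a measure \<Rightarrow> ('z \<Rightarrow> 'a \<Rightarrow> real^'n) \<Rightarrow> ('a \<Rightarrow> real^'n) \<Rightarrow> ennreal" where
  "risk P \<mu> fhat fP = (\<integral>\<^sup>+ z. L2sq \<mu> (\<lambda>x. fhat z x - fP x) \<partial>P)"

text \<open>PAC-Bayes bound. The infimum over p is unfolded as a bound for every p;
  p with infinite KL(p||pi) contribute +infinity to the infimum and are omitted.\<close>
definition pac_bayes_bound where
  "pac_bayes_bound P \<mu> X \<sigma> fhat fP \<pi> \<beta> (n::nat) C \<longleftrightarrow>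
     (\<forall>p. P1 \<sigma> X p \<and> KL_finite p \<pi> \<longrightarrow>
        risk P \<mu> fhat fP \<le> ennreal C *
          ((\<integral>\<^sup>+ w. L2sq \<mu> (\<lambda>x. fnet \<sigma> w x - fP x) \<partial>p) + ennreal (\<beta> / real n * KL p \<pi>)))"

definition M2sq :: "(real^'d0) measure \<Rightarrow> real" where
  "M2sq \<mu> = (\<integral>x. (norm x)\<^sup>2 \<partial>\<mu>) / real CARD('d0)"

definition M2barsq :: "(real^'d0) measure \<Rightarrow> real" where
  "M2barsq \<mu> = onorm (\<lambda>v. (\<integral>x. (\<chi> i j. x $ i * x $ j) \<partial>\<mu>) *v v)"

end

theory Submission
  imports Defs
begin

(* Fix a centre w = (w1, w2) in the ball ||w1||_F <= B1, ||w2||_F <= B2 and feed the Gaussian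
   posterior N(w1, t rho1^2 I) x N(w2, t rho2^2 I) into the PAC-Bayes bound.  Its KL divergence to
   the prior is explicit and, since ||w_l||^2 <= B_l^2 = 2 rho_l^2 D_(l-1) D_l, at most
   d (t + 1 - ln t) / 2.  As sigma is 1-Lipschitz, f_v - f_w is controlled by the perturbations of
   the two layers, so Gaussian second moments bound its mean square under the posterior, integrated
   against mu, by t E / 2.  Young's inequality with an optimised weight then gives
     sqrt (risk / C) <= ||f_w - f_P|| + sqrt (t E / 2 + beta d (t + 1 - ln t) / (2 n)),
   and t = 1 / (1 + A) with A = n E / (d beta) makes the radicand
   (beta d / n) (1 + ln (1 + A) / 2) < (beta d / n) ln (3 + A).  Finally take the infimum over w. *)

lemma has_bochner_integral_const_prob_space:
  assumes "prob_space M" shows "has_bochner_integral M (\<lambda>_. c :: real) c"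
proof -
  interpret prob_space M by fact
  show ?thesis using prob_space by (simp add: has_bochner_integral_iff)
qed

lemma nn_integral_eq_has_bochner_integral:
  assumes "has_bochner_integral M f x" "\<And>y. 0 \<le> f y"
  shows "(\<integral>\<^sup>+y. ennreal (f y) \<partial>M) = ennreal x"
  using assms by (simp add: has_bochner_integral_iff nn_integral_eq_integral)

lemma has_bochner_integral_measure_preserving:
  fixes f :: "'b \<Rightarrow> real"
  assumes g: "g \<in> measurable M N" and preserving: "distr M N g = N" and f: "has_bochner_integral N f I"
  shows "has_bochner_integral M (\<lambda>x. f (g x)) I"
proof -
  have f_meas: "f \<in> borel_measurable N" by (rule borel_measurable_has_bochner_integral[OF f])
  show ?thesis
    using f unfolding has_bochner_integral_iff
    by (simp add: integrable_distr_eq[OF g f_meas, symmetric] integral_distr[OF g f_meas, symmetric] preserving)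
qed

lemma distr_pair_snd:
  assumes "prob_space M1" "prob_space M2"
  shows "distr (M1 \<Otimes>\<^sub>M M2) M2 snd = M2"
proof -
  interpret M1: prob_space M1 by fact
  interpret M2: prob_space M2 by fact
  interpret pair_sigma_finite M1 M2 ..
  have "M2 = distr (M2 \<Otimes>\<^sub>M M1) M2 fst" by (rule M1.distr_pair_fst[symmetric])
  also have "\<dots> = distr (M2 \<Otimes>\<^sub>M M1) M2 (snd \<circ> (\<lambda>(x, y). (y, x)))"
    by (simp add: comp_def case_prod_beta)
  also have "\<dots> = distr (distr (M2 \<Otimes>\<^sub>M M1) (M1 \<Otimes>\<^sub>M M2) (\<lambda>(x, y). (y, x))) M2 snd"
    by (rule distr_distr[symmetric]) auto
  also have "\<dots> = distr (M1 \<Otimes>\<^sub>M M2) M2 snd"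
    by (simp only: distr_pair_swap[symmetric])
  finally show ?thesis ..
qed

lemma has_bochner_integral_pair_fst:
  assumes "prob_space M2" "has_bochner_integral M1 f (I :: real)"
  shows "has_bochner_integral (M1 \<Otimes>\<^sub>M M2) (\<lambda>w. f (fst w)) I"
  by (rule has_bochner_integral_measure_preserving[OF measurable_fst prob_space.distr_pair_fst[OF assms(1)] assms(2)])

lemma has_bochner_integral_pair_snd:
  assumes "prob_space M1" "prob_space M2" "has_bochner_integral M2 f (I :: real)"
  shows "has_bochner_integral (M1 \<Otimes>\<^sub>M M2) (\<lambda>w. f (snd w)) I"
  by (rule has_bochner_integral_measure_preserving[OF measurable_snd distr_pair_snd[OF assms(1,2)] assms(3)])

lemma has_bochner_integral_lborel_prod_Basis:
  fixes f :: "'a::euclidean_space \<Rightarrow> real \<Rightarrow> real"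
  assumes int: "\<And>b. b \<in> Basis \<Longrightarrow> integrable lborel (f b)"
  shows "has_bochner_integral lborel (\<lambda>x::'a. \<Prod>b\<in>Basis. f b (x \<bullet> b)) (\<Prod>b\<in>Basis. \<integral>x. f b x \<partial>lborel)"
proof -
  interpret product_sigma_finite "\<lambda>_::'a. lborel::real measure" by standard
  have meas: "(\<lambda>x::'a. \<Prod>b\<in>Basis. f b (x \<bullet> b)) \<in> borel_measurable borel"
    using int by (intro borel_measurable_prod) (auto dest: borel_measurable_integrable)
  have coords: "(\<lambda>g. \<Sum>b\<in>Basis. g b *\<^sub>R b) \<in> measurable (\<Pi>\<^sub>M b\<in>Basis. lborel) (borel :: 'a measure)"
    by measurable
  have eq: "(\<Prod>b'\<in>Basis. f b' ((\<Sum>b\<in>Basis. g b *\<^sub>R b) \<bullet> b')) = (\<Prod>b\<in>Basis. f b (g b))" for g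
    by (intro prod.cong refl) (simp add: inner_sum_left inner_Basis if_distrib cong: if_cong)
  have "has_bochner_integral (\<Pi>\<^sub>M b\<in>Basis. lborel) (\<lambda>g. \<Prod>b\<in>Basis. f b (g b)) (\<Prod>b\<in>Basis. \<integral>x. f b x \<partial>lborel)"
    using int by (auto simp: has_bochner_integral_iff intro!: product_integrable_prod product_integral_prod)
  then show ?thesis
    by (subst lborel_eq) (rule has_bochner_integral_distr[OF meas[simplified] coords], simp add: eq)
qed

section \<open>Isotropic Gaussian measures\<close>

(* iso_normal m s is N(m, s^2 I): as in normal_density, s is a standard deviation. *)
definition iso_normal_density :: "'a::euclidean_space \<Rightarrow> real \<Rightarrow> 'a \<Rightarrow> real" where
  "iso_normal_density m s w = (\<Prod>b\<in>Basis. normal_density (m \<bullet> b) s (w \<bullet> b))"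

definition iso_normal :: "'a::euclidean_space \<Rightarrow> real \<Rightarrow> 'a measure" where
  "iso_normal m s = density lborel (\<lambda>w. ennreal (iso_normal_density m s w))"

lemma iso_normal_density_nonneg: "0 \<le> iso_normal_density m s w"
  unfolding iso_normal_density_def by (simp add: prod_nonneg)

lemma iso_normal_density_pos: "0 < s \<Longrightarrow> 0 < iso_normal_density m s w"
  unfolding iso_normal_density_def by (simp add: prod_pos normal_density_pos)

lemma borel_measurable_iso_normal_density[measurable]: "iso_normal_density m s \<in> borel_measurable borel"
  unfolding iso_normal_density_def by measurable

lemma sets_iso_normal[simp, measurable_cong]: "sets (iso_normal m s) = sets borel"
  by (simp add: iso_normal_def)

lemma prob_space_iso_normal:
  assumes "0 < s" shows "prob_space (iso_normal m s)"
proof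
  have "emeasure (iso_normal m s) (space (iso_normal m s))
      = (\<integral>\<^sup>+w. (\<Prod>b\<in>Basis. ennreal (normal_density (m \<bullet> b) s (w \<bullet> b))) \<partial>lborel)"
    by (simp add: iso_normal_def emeasure_density iso_normal_density_def prod_ennreal)
  also have "\<dots> = (\<Prod>b\<in>Basis. (\<integral>\<^sup>+x. ennreal (normal_density (m \<bullet> b) s x) \<partial>lborel))"
    by (rule nn_integral_lborel_prod) auto
  also have "\<dots> = 1"
    using assms by (simp add: nn_integral_eq_integral integral_normal_density)
  finally show "emeasure (iso_normal m s) (space (iso_normal m s)) = 1" .
qed

lemma has_bochner_integral_iso_normal_prod:
  fixes H :: "'a::euclidean_space \<Rightarrow> real \<Rightarrow> real"
  assumes s: "0 < s"
    and H: "\<And>b. b \<in> Basis \<Longrightarrow> has_bochner_integral lborel (\<lambda>x. normal_density (m \<bullet> b) s x * H b x) (I b)"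
  shows "has_bochner_integral (iso_normal m s) (\<lambda>w. \<Prod>b\<in>Basis. H b (w \<bullet> b)) (\<Prod>b\<in>Basis. I b)"
proof -
  have H_meas: "H b \<in> borel_measurable borel" if "b \<in> Basis" for b
  proof -
    have "(\<lambda>x. normal_density (m \<bullet> b) s x * H b x) \<in> borel_measurable borel"
      using borel_measurable_has_bochner_integral[OF H[OF that]] by simp
    then have "(\<lambda>x. normal_density (m \<bullet> b) s x * H b x / normal_density (m \<bullet> b) s x) \<in> borel_measurable borel"
      by measurable
    moreover have "(\<lambda>x. normal_density (m \<bullet> b) s x * H b x / normal_density (m \<bullet> b) s x) = H b"
      using normal_density_pos[OF s, of "m \<bullet> b"] by (simp add: fun_eq_iff less_imp_neq[symmetric])
    ultimately show ?thesis by simp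
  qed
  have eq: "iso_normal_density m s w * (\<Prod>b\<in>Basis. H b (w \<bullet> b))
      = (\<Prod>b\<in>Basis. normal_density (m \<bullet> b) s (w \<bullet> b) * H b (w \<bullet> b))" for w
    by (simp add: iso_normal_density_def prod.distrib)
  have lborel: "has_bochner_integral lborel
      (\<lambda>w. \<Prod>b\<in>Basis. normal_density (m \<bullet> b) s (w \<bullet> b) * H b (w \<bullet> b)) (\<Prod>b\<in>Basis. I b)"
    using has_bochner_integral_lborel_prod_Basis[of "\<lambda>b x. normal_density (m \<bullet> b) s x * H b x"] H
    by (auto simp: has_bochner_integral_iff intro!: prod.cong)
  show ?thesis
    unfolding iso_normal_def
  proof (rule has_bochner_integral_density)
    show "(\<lambda>w. \<Prod>b\<in>Basis. H b (w \<bullet> b)) \<in> borel_measurable lborel"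
      using H_meas by (auto intro!: borel_measurable_prod)
  qed (use lborel in \<open>simp_all add: eq iso_normal_density_nonneg\<close>)
qed

lemma iso_normal_coord_cov:
  fixes m :: "'a::euclidean_space"
  assumes s: "0 < s" and a: "a \<in> Basis" and b: "b \<in> Basis"
  shows "has_bochner_integral (iso_normal m s) (\<lambda>w. (w \<bullet> a - m \<bullet> a) * (w \<bullet> b - m \<bullet> b))
    (if a = b then s\<^sup>2 else 0)"
proof -
  define H where "H c x = (if c = a then x - m \<bullet> a else 1) * (if c = b then x - m \<bullet> b else 1)" for c x
  define I where "I c = (if c = a \<and> c = b then s\<^sup>2 else if c = a \<or> c = b then 0 else 1)" for c
  have "has_bochner_integral lborel (\<lambda>x. normal_density (m \<bullet> c) s x * H c x) (I c)" for c
    using normal_moment_even[OF s, of "m \<bullet> c" 0] normal_moment_odd[OF s, of "m \<bullet> c" 0]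
      normal_moment_even[OF s, of "m \<bullet> c" 1]
    by (auto simp: H_def I_def power2_eq_square)
  from has_bochner_integral_iso_normal_prod[OF s this]
  have "has_bochner_integral (iso_normal m s) (\<lambda>w. \<Prod>c\<in>Basis. H c (w \<bullet> c)) (\<Prod>c\<in>Basis. I c)" .
  moreover have "(\<Prod>c\<in>Basis. H c (w \<bullet> c)) = (w \<bullet> a - m \<bullet> a) * (w \<bullet> b - m \<bullet> b)" for w
    unfolding H_def prod.distrib using a b by (simp add: prod.delta)
  moreover have "(\<Prod>c\<in>Basis. I c) = (if a = b then s\<^sup>2 else 0)"
    using a b by (cases "a = b") (auto simp: I_def prod.delta prod_zero cong: if_cong)
  ultimately show ?thesis by simp
qed

lemma iso_normal_coord_mean:
  fixes m :: "'a::euclidean_space"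
  assumes s: "0 < s" and a: "a \<in> Basis"
  shows "has_bochner_integral (iso_normal m s) (\<lambda>w. w \<bullet> a - m \<bullet> a) 0"
proof -
  define H where "H c x = (if c = a then x - m \<bullet> a else 1)" for c x
  have "has_bochner_integral lborel (\<lambda>x. normal_density (m \<bullet> c) s x * H c x) (if c = a then 0 else 1)" for c
    using normal_moment_even[OF s, of "m \<bullet> c" 0] normal_moment_odd[OF s, of "m \<bullet> c" 0]
    by (auto simp: H_def)
  from has_bochner_integral_iso_normal_prod[OF s this]
  show ?thesis using a by (simp add: H_def prod.delta)
qed

lemma inner_diff_eq_sum_Basis:
  fixes w m c :: "'a::euclidean_space"
  shows "w \<bullet> c - m \<bullet> c = (\<Sum>a\<in>Basis. (c \<bullet> a) * (w \<bullet> a - m \<bullet> a))"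
  by (simp add: inner_diff_left[symmetric] euclidean_inner[of "w - m" c] mult.commute)

lemma iso_normal_inner_mean:
  fixes m c :: "'a::euclidean_space"
  assumes s: "0 < s"
  shows "has_bochner_integral (iso_normal m s) (\<lambda>w. w \<bullet> c - m \<bullet> c) 0"
proof -
  have "has_bochner_integral (iso_normal m s) (\<lambda>w. \<Sum>a\<in>Basis. (c \<bullet> a) * (w \<bullet> a - m \<bullet> a)) (\<Sum>a\<in>Basis. (c \<bullet> a) * 0)"
    by (intro has_bochner_integral_sum has_bochner_integral_mult_right iso_normal_coord_mean[OF s])
  then show ?thesis by (simp add: inner_diff_eq_sum_Basis[symmetric])
qed

lemma iso_normal_inner_var:
  fixes m c :: "'a::euclidean_space"
  assumes s: "0 < s"
  shows "has_bochner_integral (iso_normal m s) (\<lambda>w. (w \<bullet> c - m \<bullet> c)\<^sup>2) (s\<^sup>2 * (norm c)\<^sup>2)"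
proof -
  have expand: "(w \<bullet> c - m \<bullet> c)\<^sup>2
      = (\<Sum>a\<in>Basis. \<Sum>b\<in>Basis. (c \<bullet> a) * (c \<bullet> b) * ((w \<bullet> a - m \<bullet> a) * (w \<bullet> b - m \<bullet> b)))" for w
    unfolding inner_diff_eq_sum_Basis[of w c m] power2_eq_square sum_product by (simp add: ac_simps)
  have "has_bochner_integral (iso_normal m s) (\<lambda>w. (w \<bullet> c - m \<bullet> c)\<^sup>2)
      (\<Sum>a\<in>Basis. \<Sum>b\<in>Basis. (c \<bullet> a) * (c \<bullet> b) * (if a = b then s\<^sup>2 else 0))"
    unfolding expand
    by (intro has_bochner_integral_sum has_bochner_integral_mult_right iso_normal_coord_cov[OF s])
  also have "(\<Sum>a\<in>Basis. \<Sum>b\<in>Basis. (c \<bullet> a) * (c \<bullet> b) * (if a = b then s\<^sup>2 else 0)) = s\<^sup>2 * (norm c)\<^sup>2"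
    by (simp add: if_distrib sum.delta power2_norm_eq_inner euclidean_inner[of c c] sum_distrib_left
        mult_ac cong: if_cong)
  finally show ?thesis .
qed

lemma iso_normal_inner_sq:
  fixes m c :: "'a::euclidean_space"
  assumes s: "0 < s"
  shows "has_bochner_integral (iso_normal m s) (\<lambda>w. (w \<bullet> c)\<^sup>2) ((m \<bullet> c)\<^sup>2 + s\<^sup>2 * (norm c)\<^sup>2)"
proof -
  have eq: "(\<lambda>w. (w \<bullet> c - m \<bullet> c)\<^sup>2 + 2 * (m \<bullet> c) * (w \<bullet> c - m \<bullet> c) + (m \<bullet> c)\<^sup>2) = (\<lambda>w. (w \<bullet> c)\<^sup>2)"
    by (rule ext) (simp add: power2_eq_square algebra_simps)
  have "has_bochner_integral (iso_normal m s)
      (\<lambda>w. (w \<bullet> c - m \<bullet> c)\<^sup>2 + 2 * (m \<bullet> c) * (w \<bullet> c - m \<bullet> c) + (m \<bullet> c)\<^sup>2)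
      (s\<^sup>2 * (norm c)\<^sup>2 + 2 * (m \<bullet> c) * 0 + (m \<bullet> c)\<^sup>2)"
    by (intro has_bochner_integral_add has_bochner_integral_mult_right iso_normal_inner_var[OF s]
        iso_normal_inner_mean[OF s] has_bochner_integral_const_prob_space prob_space_iso_normal s)
  then show ?thesis unfolding eq by (simp add: add.commute)
qed

lemma iso_normal_norm_sq:
  fixes m :: "'a::euclidean_space"
  assumes s: "0 < s"
  shows "has_bochner_integral (iso_normal m s) (\<lambda>w. (norm w)\<^sup>2) ((norm m)\<^sup>2 + s\<^sup>2 * real DIM('a))"
proof -
  have sq: "(norm v)\<^sup>2 = (\<Sum>b\<in>Basis. (v \<bullet> b)\<^sup>2)" for v :: 'a
    unfolding power2_norm_eq_inner by (subst euclidean_inner) (simp add: power2_eq_square)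
  have "has_bochner_integral (iso_normal m s) (\<lambda>w. \<Sum>b\<in>Basis. (w \<bullet> b)\<^sup>2) (\<Sum>b\<in>Basis. (m \<bullet> b)\<^sup>2 + s\<^sup>2 * (norm b)\<^sup>2)"
    by (intro has_bochner_integral_sum iso_normal_inner_sq[OF s])
  then show ?thesis
    by (simp add: sq[symmetric] sum.distrib mult.commute)
qed

lemma prob_space_pair_iso_normal:
  assumes "0 < s1" "0 < s2"
  shows "prob_space (iso_normal (m1::'a::euclidean_space) s1 \<Otimes>\<^sub>M iso_normal (m2::'b::euclidean_space) s2)"
proof -
  interpret a: prob_space "iso_normal m1 s1" by (rule prob_space_iso_normal) fact
  interpret b: prob_space "iso_normal m2 s2" by (rule prob_space_iso_normal) fact
  interpret pair_prob_space "iso_normal m1 s1" "iso_normal m2 s2" ..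
  show ?thesis by (rule P.prob_space_axioms)
qed

lemma sets_pair_iso_normal[simp, measurable_cong]:
  "sets (iso_normal m1 s1 \<Otimes>\<^sub>M iso_normal m2 s2) = sets borel"
  by (rule trans[OF sets_pair_measure_cong[OF sets_iso_normal sets_iso_normal]]) (simp only: borel_prod)

lemma pair_iso_normal_eq_density:
  assumes "0 < s2"
  shows "iso_normal (m1::'a::euclidean_space) s1 \<Otimes>\<^sub>M iso_normal (m2::'b::euclidean_space) s2
     = density lborel (\<lambda>w. ennreal (iso_normal_density m1 s1 (fst w) * iso_normal_density m2 s2 (snd w)))"
proof -
  interpret p2: prob_space "iso_normal m2 s2" by (rule prob_space_iso_normal) fact
  have "iso_normal m1 s1 \<Otimes>\<^sub>M iso_normal m2 s2 = density (lborel \<Otimes>\<^sub>M lborel)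
      (\<lambda>(x,y). ennreal (iso_normal_density m1 s1 x) * ennreal (iso_normal_density m2 s2 y))"
    unfolding iso_normal_def
    by (rule pair_measure_density)
       (use p2.sigma_finite_measure_axioms sigma_finite_lborel in \<open>auto simp: iso_normal_def\<close>)
  also have "\<dots> = density lborel (\<lambda>w. ennreal (iso_normal_density m1 s1 (fst w) * iso_normal_density m2 s2 (snd w)))"
    by (subst lborel_prod, rule arg_cong[where f = "density lborel"])
       (auto simp: fun_eq_iff ennreal_mult iso_normal_density_nonneg)
  finally show ?thesis .
qed

lemma power2_norm_vec_eq_sum: "(norm (v :: real^'n))\<^sup>2 = (\<Sum>k\<in>UNIV. (v $ k)\<^sup>2)"
  unfolding power2_norm_eq_inner inner_vec_def by (simp add: power2_eq_square)

lemma power2_norm_matrix_eq_sum: "(norm (A :: real^'n^'m))\<^sup>2 = (\<Sum>i\<in>UNIV. \<Sum>k\<in>UNIV. (A $ i $ k)\<^sup>2)"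
proof -
  have "(norm A)\<^sup>2 = (\<Sum>i\<in>UNIV. (norm (A $ i))\<^sup>2)"
    unfolding power2_norm_eq_inner inner_vec_def[of A A] ..
  then show ?thesis by (simp add: power2_norm_vec_eq_sum)
qed

lemma power2_norm_matrix_eq_sum_columns: "(norm (A :: real^'n^'m))\<^sup>2 = (\<Sum>k\<in>UNIV. (norm (column k A))\<^sup>2)"
proof -
  have "(norm A)\<^sup>2 = (\<Sum>k\<in>UNIV. \<Sum>i\<in>UNIV. (A $ i $ k)\<^sup>2)"
    unfolding power2_norm_matrix_eq_sum by (rule sum.swap)
  then show ?thesis by (simp add: power2_norm_vec_eq_sum column_def)
qed

lemma vector_matrix_mult_component: "((x :: real^'m) v* A) $ k = x \<bullet> column k A"
  by (simp add: vector_matrix_mult_def column_def inner_vec_def)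

lemma norm_vector_matrix_mult_le: "norm ((y :: real^'m) v* (A :: real^'n^'m)) \<le> norm y * norm A"
proof (rule power2_le_imp_le)
  have "(norm (y v* A))\<^sup>2 = (\<Sum>k\<in>UNIV. (y \<bullet> column k A)\<^sup>2)"
    by (simp add: power2_norm_vec_eq_sum vector_matrix_mult_component)
  also have "\<dots> \<le> (\<Sum>k\<in>UNIV. (norm y * norm (column k A))\<^sup>2)"
  proof (rule sum_mono)
    fix k
    have "\<bar>y \<bullet> column k A\<bar> \<le> \<bar>norm y * norm (column k A)\<bar>"
      using Cauchy_Schwarz_ineq2[of y "column k A"] by simp
    then show "(y \<bullet> column k A)\<^sup>2 \<le> (norm y * norm (column k A))\<^sup>2"
      by (simp only: abs_le_square_iff)
  qed
  also have "\<dots> = (norm y * norm A)\<^sup>2"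
    by (simp add: power_mult_distrib power2_norm_matrix_eq_sum_columns[of A] sum_distrib_left)
  finally show "(norm (y v* A))\<^sup>2 \<le> (norm y * norm A)\<^sup>2" .
qed simp

definition column_matrix :: "real^'m \<Rightarrow> 'n \<Rightarrow> real^'n^'m" where
  "column_matrix y k = (\<chi> i. y $ i *\<^sub>R axis k 1)"

lemma vector_matrix_mult_component_eq_inner: "(y v* w) $ k = w \<bullet> column_matrix y k"
  unfolding column_matrix_def inner_vec_def[of w] vector_matrix_mult_def by (simp add: inner_axis mult.commute)

lemma norm_column_matrix: "norm (column_matrix y k) = norm y"
proof -
  have "(column_matrix y k $ i $ j)\<^sup>2 = (if j = k then (y $ i)\<^sup>2 else 0)" for i j
    by (simp add: column_matrix_def axis_def)
  then have "(norm (column_matrix y k))\<^sup>2 = (norm y)\<^sup>2"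
    by (simp add: power2_norm_matrix_eq_sum power2_norm_vec_eq_sum)
  then show ?thesis by simp
qed

lemma iso_normal_vector_matrix_centered:
  fixes m :: "real^'n^'m" and y :: "real^'m"
  assumes s: "0 < s"
  shows "has_bochner_integral (iso_normal m s) (\<lambda>w. (norm (y v* w - y v* m))\<^sup>2) (s\<^sup>2 * real CARD('n) * (norm y)\<^sup>2)"
proof -
  have "(norm (y v* w - y v* m))\<^sup>2 = (\<Sum>k\<in>UNIV. (w \<bullet> column_matrix y k - m \<bullet> column_matrix y k)\<^sup>2)" for w
    by (simp add: power2_norm_vec_eq_sum vector_matrix_mult_component_eq_inner)
  moreover have "has_bochner_integral (iso_normal m s)
      (\<lambda>w. (w \<bullet> column_matrix y k - m \<bullet> column_matrix y k)\<^sup>2) (s\<^sup>2 * (norm y)\<^sup>2)" for k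
    using iso_normal_inner_var[OF s, of m "column_matrix y k"] by (simp only: norm_column_matrix)
  then have "has_bochner_integral (iso_normal m s)
      (\<lambda>w. \<Sum>k\<in>UNIV. (w \<bullet> column_matrix y k - m \<bullet> column_matrix y k)\<^sup>2) (\<Sum>k\<in>(UNIV::'n set). s\<^sup>2 * (norm y)\<^sup>2)"
    by (intro has_bochner_integral_sum)
  ultimately show ?thesis by (simp add: mult_ac)
qed

lemma iso_normal_vector_matrix_sq:
  fixes m :: "real^'n^'m" and y :: "real^'m"
  assumes s: "0 < s"
  shows "has_bochner_integral (iso_normal m s) (\<lambda>w. (norm (y v* w))\<^sup>2)
    ((norm (y v* m))\<^sup>2 + s\<^sup>2 * real CARD('n) * (norm y)\<^sup>2)"
proof -
  have sq: "(norm (y v* v))\<^sup>2 = (\<Sum>k\<in>UNIV. (v \<bullet> column_matrix y k)\<^sup>2)" for v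
    by (simp add: power2_norm_vec_eq_sum vector_matrix_mult_component_eq_inner)
  have "has_bochner_integral (iso_normal m s) (\<lambda>w. (w \<bullet> column_matrix y k)\<^sup>2)
      ((m \<bullet> column_matrix y k)\<^sup>2 + s\<^sup>2 * (norm y)\<^sup>2)" for k
    using iso_normal_inner_sq[OF s, of m "column_matrix y k"] by (simp only: norm_column_matrix)
  then have "has_bochner_integral (iso_normal m s) (\<lambda>w. \<Sum>k\<in>UNIV. (w \<bullet> column_matrix y k)\<^sup>2)
      (\<Sum>k\<in>(UNIV::'n set). (m \<bullet> column_matrix y k)\<^sup>2 + s\<^sup>2 * (norm y)\<^sup>2)"
    by (intro has_bochner_integral_sum)
  then show ?thesis
    by (simp add: sq sum.distrib mult_ac)
qed

section \<open>Kullback-Leibler divergence between isotropic Gaussians\<close>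

lemma KL_divergence_density_lborel:
  fixes g h :: "'a::euclidean_space \<Rightarrow> real"
  assumes g[measurable]: "g \<in> borel_measurable borel" and g_nonneg: "\<And>w. 0 \<le> g w"
    and h[measurable]: "h \<in> borel_measurable borel" and h_pos: "\<And>w. 0 < h w"
    and sigma_finite: "sigma_finite_measure (density lborel h)"
    and int: "integrable (density lborel g) (\<lambda>w. ln (g w / h w))"
  shows "absolutely_continuous (density lborel h) (density lborel g)"
    and "integrable (density lborel g) (entropy_density (exp 1) (density lborel h) (density lborel g))"
    and "KL_divergence (exp 1) (density lborel h) (density lborel g) = (\<integral>w. ln (g w / h w) \<partial>density lborel g)"
proof -
  define q where "q = density lborel (\<lambda>w. ennreal (h w))"
  define r where "r w = g w / h w" for w
  have r[measurable]: "r \<in> borel_measurable borel" unfolding r_def by measurable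
  have r_nonneg: "0 \<le> r w" for w unfolding r_def using g_nonneg h_pos by (simp add: less_imp_le)
  have p_eq: "density lborel (\<lambda>w. ennreal (g w)) = density q (\<lambda>w. ennreal (r w))"
    unfolding q_def r_def
    by (rule density_density_divide[symmetric])
       (use g_nonneg h_pos in \<open>auto simp: less_imp_le intro!: AE_I2 simp: h_pos[THEN less_imp_neq, symmetric]\<close>)
  interpret q: sigma_finite_measure q using sigma_finite unfolding q_def .
  have sets_q[simp]: "sets q = sets borel" "space q = UNIV" unfolding q_def by auto
  have [measurable]: "r \<in> borel_measurable q" "(\<lambda>w. ln (g w / h w)) \<in> borel_measurable q"
    by (simp_all add: measurable_cong_sets[OF sets_q(1) refl])
  have ac: "absolutely_continuous q (density q (\<lambda>w. ennreal (r w)))"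
    by (rule absolutely_continuousI_density) simp
  have "AE w in q. RN_deriv q (density q (\<lambda>w. ennreal (r w))) w = ennreal (r w)"
    by (rule q.density_unique) (auto simp: density_RN_deriv_density)
  then have "AE w in q. entropy_density (exp 1) q (density q (\<lambda>w. ennreal (r w))) w = ln (r w)"
    by eventually_elim (simp add: entropy_density_def r_nonneg log_def)
  then have ae: "AE w in density q (\<lambda>w. ennreal (r w)).
      entropy_density (exp 1) q (density q (\<lambda>w. ennreal (r w))) w = ln (r w)"
    by (rule absolutely_continuous_AE[OF _ ac, rotated]) simp
  show "absolutely_continuous (density lborel h) (density lborel g)"
    using ac unfolding p_eq q_def .
  show "integrable (density lborel g) (entropy_density (exp 1) (density lborel h) (density lborel g))"
    unfolding p_eq q_def[symmetric]
    by (rule integrable_cong_AE[THEN iffD2, OF _ _ ae]) (use int in \<open>simp_all add: p_eq r_def\<close>)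
  show "KL_divergence (exp 1) (density lborel h) (density lborel g) = (\<integral>w. ln (g w / h w) \<partial>density lborel g)"
    unfolding p_eq q_def[symmetric] KL_divergence_def
    by (rule integral_cong_AE) (use ae in \<open>simp_all add: r_def\<close>)
qed

lemma ln_normal_density_ratio:
  assumes "0 < s" "0 < r"
  shows "ln (normal_density m s x / normal_density 0 r x) = ln (r / s) - (x - m)\<^sup>2 / (2 * s\<^sup>2) + x\<^sup>2 / (2 * r\<^sup>2)"
proof -
  have sqrt_eq: "sqrt (2 * pi * t\<^sup>2) = sqrt (2 * pi) * t" if "0 < t" for t
    using that by (simp add: real_sqrt_mult)
  have "normal_density m s x / normal_density 0 r x
      = (sqrt (2 * pi) * r) / (sqrt (2 * pi) * s) * (exp (-(x - m)\<^sup>2 / (2 * s\<^sup>2)) / exp (-(x - 0)\<^sup>2 / (2 * r\<^sup>2)))"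
    unfolding normal_density_def sqrt_eq[OF assms(1)] sqrt_eq[OF assms(2)] by simp
  also have "\<dots> = (r / s) * exp (- (x - m)\<^sup>2 / (2 * s\<^sup>2) + x\<^sup>2 / (2 * r\<^sup>2))"
    by (simp add: exp_diff[symmetric])
  finally show ?thesis using assms by (simp add: ln_div ln_mult)
qed

lemma ln_iso_normal_density_ratio:
  fixes m w :: "'a::euclidean_space"
  assumes s: "0 < s" and r: "0 < r"
  shows "ln (iso_normal_density m s w / iso_normal_density 0 r w)
    = (\<Sum>b\<in>Basis. ln (r / s) - (w \<bullet> b - m \<bullet> b)\<^sup>2 / (2 * s\<^sup>2) + (w \<bullet> b)\<^sup>2 / (2 * r\<^sup>2))"
proof -
  have "iso_normal_density m s w / iso_normal_density 0 r w
      = (\<Prod>b\<in>Basis. normal_density (m \<bullet> b) s (w \<bullet> b) / normal_density 0 r (w \<bullet> b))"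
    unfolding iso_normal_density_def by (simp add: prod_dividef)
  also have "ln \<dots> = (\<Sum>b\<in>Basis. ln (normal_density (m \<bullet> b) s (w \<bullet> b) / normal_density 0 r (w \<bullet> b)))"
    by (intro ln_prod dual_order.strict_implies_not_eq divide_pos_pos normal_density_pos s r) simp
  finally show ?thesis
    using s r by (simp add: ln_normal_density_ratio)
qed

definition iso_normal_KL :: "'a::euclidean_space \<Rightarrow> real \<Rightarrow> real \<Rightarrow> real" where
  "iso_normal_KL m s r = real DIM('a) * (ln (r / s) - 1/2 + s\<^sup>2 / (2 * r\<^sup>2)) + (norm m)\<^sup>2 / (2 * r\<^sup>2)"

lemma iso_normal_log_ratio_integral:
  fixes m :: "'a::euclidean_space"
  assumes s: "0 < s" and r: "0 < r"
  shows "has_bochner_integral (iso_normal m s) (\<lambda>w. ln (iso_normal_density m s w / iso_normal_density 0 r w))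
    (iso_normal_KL m s r)"
proof -
  have coord: "has_bochner_integral (iso_normal m s)
      (\<lambda>w. ln (r / s) - (w \<bullet> b - m \<bullet> b)\<^sup>2 / (2 * s\<^sup>2) + (w \<bullet> b)\<^sup>2 / (2 * r\<^sup>2))
      ((ln (r / s) - 1/2 + s\<^sup>2 / (2 * r\<^sup>2)) + (m \<bullet> b)\<^sup>2 / (2 * r\<^sup>2))" if b: "b \<in> Basis" for b
  proof -
    have "has_bochner_integral (iso_normal m s)
        (\<lambda>w. ln (r / s) - (w \<bullet> b - m \<bullet> b)\<^sup>2 / (2 * s\<^sup>2) + (w \<bullet> b)\<^sup>2 / (2 * r\<^sup>2))
        (ln (r / s) - s\<^sup>2 * (norm b)\<^sup>2 / (2 * s\<^sup>2) + ((m \<bullet> b)\<^sup>2 + s\<^sup>2 * (norm b)\<^sup>2) / (2 * r\<^sup>2))"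
      by (intro has_bochner_integral_add has_bochner_integral_diff has_bochner_integral_divide_zero
          has_bochner_integral_const_prob_space prob_space_iso_normal iso_normal_inner_var iso_normal_inner_sq s)
    moreover have "ln (r / s) - s\<^sup>2 * (norm b)\<^sup>2 / (2 * s\<^sup>2) + ((m \<bullet> b)\<^sup>2 + s\<^sup>2 * (norm b)\<^sup>2) / (2 * r\<^sup>2)
        = (ln (r / s) - 1/2 + s\<^sup>2 / (2 * r\<^sup>2)) + (m \<bullet> b)\<^sup>2 / (2 * r\<^sup>2)"
      using b s by (simp add: add_divide_distrib)
    ultimately show ?thesis by (simp only:)
  qed
  have "(\<Sum>b\<in>(Basis::'a set). (ln (r / s) - 1/2 + s\<^sup>2 / (2 * r\<^sup>2)) + (m \<bullet> b)\<^sup>2 / (2 * r\<^sup>2))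
      = iso_normal_KL m s r"
    unfolding iso_normal_KL_def sum.distrib power2_norm_eq_inner euclidean_inner[of m m]
    by (simp add: sum_divide_distrib power2_eq_square distrib_left)
  moreover have "has_bochner_integral (iso_normal m s)
      (\<lambda>w. \<Sum>b\<in>Basis. ln (r / s) - (w \<bullet> b - m \<bullet> b)\<^sup>2 / (2 * s\<^sup>2) + (w \<bullet> b)\<^sup>2 / (2 * r\<^sup>2))
      (\<Sum>b\<in>(Basis::'a set). (ln (r / s) - 1/2 + s\<^sup>2 / (2 * r\<^sup>2)) + (m \<bullet> b)\<^sup>2 / (2 * r\<^sup>2))"
    by (intro has_bochner_integral_sum coord)
  ultimately show ?thesis
    by (simp add: ln_iso_normal_density_ratio[OF s r])
qed

lemma KL_pair_iso_normal:
  fixes m1 :: "'a::euclidean_space" and m2 :: "'b::euclidean_space"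
  assumes s1: "0 < s1" and s2: "0 < s2" and r1: "0 < r1" and r2: "0 < r2"
  defines "p \<equiv> iso_normal m1 s1 \<Otimes>\<^sub>M iso_normal m2 s2"
    and "q \<equiv> iso_normal 0 r1 \<Otimes>\<^sub>M iso_normal (0::'b) r2"
  shows "KL_finite p q" and "KL p q = iso_normal_KL m1 s1 r1 + iso_normal_KL m2 s2 r2"
proof -
  define g where "g w = iso_normal_density m1 s1 (fst w) * iso_normal_density m2 s2 (snd w)" for w :: "'a \<times> 'b"
  define h where "h w = iso_normal_density 0 r1 (fst w) * iso_normal_density 0 r2 (snd w)" for w :: "'a \<times> 'b"
  have p_eq: "p = density lborel g" unfolding p_def g_def by (rule pair_iso_normal_eq_density[OF s2])
  have q_eq: "q = density lborel h" unfolding q_def h_def by (rule pair_iso_normal_eq_density[OF r2])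
  interpret q: prob_space q unfolding q_def by (rule prob_space_pair_iso_normal[OF r1 r2])
  have ratio: "ln (g w / h w) = ln (iso_normal_density m1 s1 (fst w) / iso_normal_density 0 r1 (fst w))
      + ln (iso_normal_density m2 s2 (snd w) / iso_normal_density 0 r2 (snd w))" for w
    unfolding g_def h_def using s1 s2 r1 r2 by (simp add: iso_normal_density_pos ln_mult_pos[symmetric])
  have int: "has_bochner_integral p (\<lambda>w. ln (g w / h w)) (iso_normal_KL m1 s1 r1 + iso_normal_KL m2 s2 r2)"
    unfolding ratio p_def
    by (intro has_bochner_integral_add has_bochner_integral_pair_fst has_bochner_integral_pair_snd
        prob_space_iso_normal iso_normal_log_ratio_integral s1 s2 r1 r2)
  have g_meas: "g \<in> borel_measurable borel" and h_meas: "h \<in> borel_measurable borel"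
    unfolding g_def h_def borel_prod[symmetric] by measurable
  have g_nonneg: "0 \<le> g w" and h_pos: "0 < h w" for w
    unfolding g_def h_def using r1 r2 by (simp_all add: iso_normal_density_nonneg iso_normal_density_pos)
  have "sigma_finite_measure (density lborel h)"
    using q.sigma_finite_measure_axioms unfolding q_eq .
  note KL' = KL_divergence_density_lborel[OF g_meas g_nonneg h_meas h_pos this
      integrable.intros[OF int[unfolded p_eq]], folded p_eq q_eq]
  show "KL_finite p q" unfolding KL_finite_def using KL'(1,2) ..
  show "KL p q = iso_normal_KL m1 s1 r1 + iso_normal_KL m2 s2 r2"
    unfolding KL_def KL'(3) using int by (rule has_bochner_integral_integral_eq)
qed

lemma prod_Basis_matrix:
  "(\<Prod>b\<in>(Basis :: (real^'n^'m) set). F b) = (\<Prod>i\<in>UNIV. \<Prod>j\<in>UNIV. F (axis i (axis j 1)))"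
proof -
  have Basis_eq: "(Basis :: (real^'n^'m) set) = (\<lambda>(i, j). axis i (axis j 1)) ` UNIV"
    by (auto simp: Basis_vec_def image_iff)
  have inj: "inj (\<lambda>(i, j). (axis i (axis j (1::real)) :: real^'n^'m))"
    by (auto simp: inj_def axis_eq_axis)
  show ?thesis
    unfolding Basis_eq prod.reindex[OF inj] prod.cartesian_product UNIV_Times_UNIV
    by (simp add: split_beta comp_def)
qed

lemma iso_normal_density_matrix:
  "iso_normal_density (m :: real^'n^'m) s w = (\<Prod>i\<in>UNIV. \<Prod>j\<in>UNIV. normal_density (m $ i $ j) s (w $ i $ j))"
  unfolding iso_normal_density_def prod_Basis_matrix by (simp add: inner_axis)

lemma gauss_prior_eq_pair_iso_normal:
  assumes "0 < \<rho>2"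
  shows "(gauss_prior \<rho>1 \<rho>2 :: ((real^'d1^'d0) \<times> (real^'d2^'d1)) measure) = iso_normal 0 \<rho>1 \<Otimes>\<^sub>M iso_normal 0 \<rho>2"
  unfolding pair_iso_normal_eq_density[OF assms] gauss_prior_def iso_normal_density_matrix by simp

lemma iso_normal_KL_scaled_le:
  fixes m :: "'a::euclidean_space"
  assumes r: "0 < r" and t: "0 < t" "t \<le> 1" and m: "(norm m)\<^sup>2 \<le> 2 * r\<^sup>2 * real DIM('a)"
  shows "iso_normal_KL m (sqrt t * r) r \<le> real DIM('a) * ((t + 1 - ln t) / 2)"
proof -
  have "ln (r / (sqrt t * r)) = - ln t / 2"
    using r t by (simp add: ln_div ln_mult ln_sqrt)
  moreover have "(sqrt t * r)\<^sup>2 / (2 * r\<^sup>2) = t / 2"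
    using r t by (simp add: power_mult_distrib)
  moreover have "(norm m)\<^sup>2 / (2 * r\<^sup>2) \<le> real DIM('a)"
    using m r by (simp add: divide_le_eq mult.commute)
  ultimately show ?thesis
    unfolding iso_normal_KL_def by (simp add: field_simps)
qed

lemma power2_norm_add_le:
  fixes a b :: "'a::real_normed_vector"
  assumes l: "0 < l"
  shows "(norm (a + b))\<^sup>2 \<le> (1 + 1 / l) * (norm a)\<^sup>2 + (1 + l) * (norm b)\<^sup>2"
proof -
  have "2 * norm a * norm b \<le> (norm a)\<^sup>2 / l + l * (norm b)\<^sup>2"
  proof -
    have "0 \<le> (norm a - l * norm b)\<^sup>2 / l" using l by simp
    then show ?thesis using l by (simp add: power2_eq_square field_simps)
  qed
  moreover have "(norm (a + b))\<^sup>2 \<le> (norm a + norm b)\<^sup>2"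
    by (rule power_mono[OF norm_triangle_ineq]) simp
  ultimately show ?thesis by (simp add: power2_eq_square algebra_simps)
qed

lemma one_plus_half_ln_less_ln:
  fixes A :: real assumes A: "0 \<le> A"
  shows "1 + ln (1 + A) / 2 < ln (3 + A)"
proof -
  have "(exp 1)\<^sup>2 * (1 + A) \<le> (272/100::real)\<^sup>2 * (1 + A)"
    using e_less_272 A by (intro mult_right_mono power_mono) auto
  also have "\<dots> < (3 + A)\<^sup>2"
    using zero_le_power2[of "A - 0.6992"] by (simp add: power2_eq_square algebra_simps)
  finally have "(exp 1 * sqrt (1 + A))\<^sup>2 < (3 + A)\<^sup>2"
    using A by (simp add: power_mult_distrib)
  then have "exp 1 * sqrt (1 + A) < 3 + A"
    by (rule power2_less_imp_less) (use A in simp)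
  moreover have "1 + ln (1 + A) / 2 = ln (exp 1 * sqrt (1 + A))"
    using A by (simp add: ln_mult ln_sqrt)
  ultimately show ?thesis
    using A by simp
qed

lemma balanced_scale_eq:
  fixes A :: real assumes A: "0 \<le> A"
  defines "t \<equiv> 1 / (1 + A)"
  shows "t * A / 2 + (t + 1 - ln t) / 2 = 1 + ln (1 + A) / 2"
proof -
  have "t * (1 + A) = 1" unfolding t_def using A by simp
  then have "t * A + t = 1" by (simp add: algebra_simps)
  moreover have "ln t = - ln (1 + A)" unfolding t_def using A by (simp add: ln_div)
  ultimately show ?thesis by (simp add: field_simps)
qed

lemma gauss_posterior_budget_lt:
  fixes \<beta> d E :: real and n :: nat
  assumes beta: "0 < \<beta>" and d: "0 < d" and n: "0 < n" and E: "0 \<le> E"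
  defines "A \<equiv> real n * E / (d * \<beta>)"
  defines "t \<equiv> 1 / (1 + A)"
  shows "t * E / 2 + \<beta> / real n * (d * ((t + 1 - ln t) / 2)) < \<beta> * d / real n * ln (3 + A)"
proof -
  have A: "0 \<le> A" unfolding A_def using E d beta by simp
  have "t * E / 2 + \<beta> / real n * (d * ((t + 1 - ln t) / 2))
      = \<beta> * d / real n * (t * A / 2 + (t + 1 - ln t) / 2)"
    unfolding A_def using beta d n by (simp add: field_simps)
  also have "\<dots> < \<beta> * d / real n * ln (3 + A)"
    unfolding t_def balanced_scale_eq[OF A]
    using beta d n by (intro mult_strict_left_mono one_plus_half_ln_less_ln[OF A]) simp
  finally show ?thesis .
qed

lemma optimise_young_weight:
  fixes a V K T R :: real
  assumes a: "0 \<le> a" and V: "0 \<le> V" and K: "0 < K" and VKT: "V + K < T"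
    and R: "\<And>l. 0 < l \<Longrightarrow> R \<le> (1 + l) * a\<^sup>2 + (1 + 1 / l) * V"
  shows "R + K \<le> (a + sqrt T)\<^sup>2"
proof (cases "a = 0")
  case True
  have T: "(sqrt T)\<^sup>2 = T" using VKT V K by simp
  show ?thesis
  proof (cases "V = 0")
    case True
    with R[of 1] \<open>a = 0\<close> T VKT show ?thesis by simp
  next
    case False
    define l where "l = V / (T - V - K)"
    have l: "0 < l" unfolding l_def using False V VKT by simp
    have "R \<le> (1 + 1 / l) * V" using R[OF l] \<open>a = 0\<close> by simp
    also have "\<dots> = T - K" unfolding l_def using False V VKT by (simp add: field_simps)
    finally show ?thesis using \<open>a = 0\<close> T by simp
  qed
next
  case False
  then have a0: "0 < a" using a by simp
  define q where "q = sqrt (V + K)"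
  have q0: "0 < q" and qq: "q\<^sup>2 = V + K" unfolding q_def using V K by simp_all
  define l where "l = q / a"
  have l: "0 < l" unfolding l_def using q0 a0 by simp
  \<comment> \<open>the weight l = sqrt (V + K) / a minimises the bound with V + K in place of V\<close>
  have "R \<le> (1 + l) * a\<^sup>2 + (1 + 1 / l) * (V + K) - K"
    using R[OF l] l K by (simp add: field_simps)
  also have "\<dots> = (a + q)\<^sup>2 - K"
    unfolding l_def qq[symmetric] using a0 q0 by (simp add: field_simps power2_eq_square)
  also have "\<dots> \<le> (a + sqrt T)\<^sup>2 - K"
    using VKT a q0 by (simp add: q_def power_mono)
  finally show ?thesis by simp
qed

lemma sqrt_div_le_of_young_bound:
  fixes r C R K a V T :: real
  assumes C: "0 < C" and r: "r \<le> C * (R + K)"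
    and a: "0 \<le> a" and V: "0 \<le> V" and K: "0 < K" and VKT: "V + K < T"
    and R: "\<And>l. 0 < l \<Longrightarrow> R \<le> (1 + l) * a\<^sup>2 + (1 + 1 / l) * V"
  shows "sqrt (r / C) \<le> a + sqrt T"
proof -
  have "r \<le> C * (a + sqrt T)\<^sup>2"
    using optimise_young_weight[OF a V K VKT R] r C by (meson less_imp_le mult_left_mono order_trans)
  then have "r / C \<le> (a + sqrt T)\<^sup>2"
    using C by (simp add: divide_le_eq mult.commute)
  then have "sqrt (r / C) \<le> sqrt ((a + sqrt T)\<^sup>2)" by (rule real_sqrt_le_mono)
  also have "\<dots> = a + sqrt T" using a VKT V K by simp
  finally show ?thesis .
qed

lemma le_INF_plus:
  fixes f :: "'a \<Rightarrow> real"
  assumes "S \<noteq> {}" "\<And>w. w \<in> S \<Longrightarrow> s \<le> f w + c"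
  shows "s \<le> (INF w\<in>S. f w) + c"
  using cINF_greatest[of S "s - c" f] assms by (auto simp: algebra_simps)

section \<open>Two-layer networks under a Gaussian posterior\<close>

definition coordwise :: "(real \<Rightarrow> real) \<Rightarrow> real^'n \<Rightarrow> real^'n" where
  "coordwise \<sigma> v = (\<chi> j. \<sigma> (v $ j))"

lemma fnet_eq_coordwise: "fnet \<sigma> w x = coordwise \<sigma> (x v* fst w) v* snd w"
  by (simp add: fnet_def coordwise_def)

lemma continuous_on_nonexpansive:
  fixes \<sigma> :: "real \<Rightarrow> real"
  assumes lip: "\<And>u u'. \<bar>\<sigma> u - \<sigma> u'\<bar> \<le> \<bar>u - u'\<bar>"
  shows "continuous_on UNIV \<sigma>"
  by (rule lipschitz_on_continuous_on[of 1], rule lipschitz_onI) (simp_all add: dist_real_def lip)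

lemma continuous_on_coordwise:
  assumes \<sigma>: "continuous_on UNIV \<sigma>" and f: "continuous_on S f"
  shows "continuous_on S (\<lambda>x. coordwise \<sigma> (f x))"
  unfolding coordwise_def
proof (intro continuous_on_vec_lambda)
  show "continuous_on S (\<lambda>x. \<sigma> (f x $ i))" for i
    by (rule continuous_on_compose2[OF \<sigma> continuous_on_component[OF f]]) auto
qed

lemma continuous_on_vector_matrix_mult[continuous_intros]:
  fixes f :: "'a::topological_space \<Rightarrow> real^'m" and g :: "'a \<Rightarrow> real^'n^'m"
  assumes "continuous_on S f" "continuous_on S g"
  shows "continuous_on S (\<lambda>x. f x v* g x)"
  unfolding vector_matrix_mult_def by (intro continuous_intros assms)

lemma borel_measurable_restrict_borel:
  assumes "sets \<mu> = sets (restrict_space borel X)" "f \<in> borel_measurable borel"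
  shows "f \<in> borel_measurable \<mu>"
  by (subst measurable_cong_sets[OF assms(1) refl]) (rule measurable_restrict_space1[OF assms(2)])

lemma borel_measurable_fnet:
  assumes "sets \<mu> = sets (restrict_space borel X)" "continuous_on UNIV \<sigma>"
  shows "fnet \<sigma> w \<in> borel_measurable \<mu>"
proof (rule borel_measurable_restrict_borel[OF assms(1)], rule borel_measurable_continuous_onI)
  show "continuous_on UNIV (fnet \<sigma> w)"
    unfolding fnet_eq_coordwise by (intro continuous_intros continuous_on_coordwise[OF assms(2)])
qed

lemma norm_coordwise_diff_le:
  fixes \<sigma> :: "real \<Rightarrow> real" and v v' :: "real^'n"
  assumes lip: "\<And>u u'. \<bar>\<sigma> u - \<sigma> u'\<bar> \<le> \<bar>u - u'\<bar>"
  shows "norm (coordwise \<sigma> v - coordwise \<sigma> v') \<le> norm (v - v')"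
proof (rule power2_le_imp_le)
  show "(norm (coordwise \<sigma> v - coordwise \<sigma> v'))\<^sup>2 \<le> (norm (v - v'))\<^sup>2"
    unfolding power2_norm_vec_eq_sum coordwise_def
    by (intro sum_mono) (simp add: abs_le_square_iff[symmetric] lip)
qed simp

lemma power2_norm_coordwise_le_bound:
  fixes \<sigma> :: "real \<Rightarrow> real" and v :: "real^'n"
  assumes bound: "\<And>u. \<bar>\<sigma> u\<bar> \<le> M"
  shows "(norm (coordwise \<sigma> v))\<^sup>2 \<le> real CARD('n) * M\<^sup>2"
proof -
  have "(norm (coordwise \<sigma> v))\<^sup>2 \<le> (\<Sum>j\<in>(UNIV::'n set). M\<^sup>2)"
    unfolding power2_norm_vec_eq_sum coordwise_def
    by (intro sum_mono) (simp add: abs_le_square_iff[symmetric] bound order_trans[OF bound abs_ge_self])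
  then show ?thesis by simp
qed

lemma norm_coordwise_le:
  fixes \<sigma> :: "real \<Rightarrow> real" and v :: "real^'n"
  assumes lip: "\<And>u u'. \<bar>\<sigma> u - \<sigma> u'\<bar> \<le> \<bar>u - u'\<bar>" and zero: "\<sigma> 0 = 0"
  shows "norm (coordwise \<sigma> v) \<le> norm v"
  using norm_coordwise_diff_le[OF lip, of v 0] zero by (simp add: coordwise_def zero_vec_def[symmetric])

lemma norm_fnet_le:
  fixes \<sigma> :: "real \<Rightarrow> real" and w :: "(real^'d1^'d0) \<times> (real^'d2^'d1)"
  assumes lip: "\<And>u u'. \<bar>\<sigma> u - \<sigma> u'\<bar> \<le> \<bar>u - u'\<bar>"
  shows "norm (fnet \<sigma> w x) \<le> (norm x * norm (fst w) + norm (coordwise \<sigma> (0::real^'d1))) * norm (snd w)"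
proof -
  have "norm (coordwise \<sigma> (x v* fst w)) \<le> norm (x v* fst w) + norm (coordwise \<sigma> (0::real^'d1))"
    using norm_coordwise_diff_le[OF lip, of "x v* fst w" 0]
      norm_triangle_ineq2[of "coordwise \<sigma> (x v* fst w)" "coordwise \<sigma> 0"] by simp
  also have "\<dots> \<le> norm x * norm (fst w) + norm (coordwise \<sigma> (0::real^'d1))"
    using norm_vector_matrix_mult_le[of x "fst w"] by simp
  finally show ?thesis
    using norm_vector_matrix_mult_le[of "coordwise \<sigma> (x v* fst w)" "snd w"]
    unfolding fnet_eq_coordwise by (meson mult_right_mono norm_ge_zero order_trans)
qed

lemma power2_norm_fnet_le:
  "(norm (fnet \<sigma> w x))\<^sup>2 \<le> (norm (coordwise \<sigma> (x v* fst w)))\<^sup>2 * (norm (snd w))\<^sup>2"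
proof -
  have "norm (fnet \<sigma> w x) \<le> norm (coordwise \<sigma> (x v* fst w)) * norm (snd w)"
    unfolding fnet_eq_coordwise by (rule norm_vector_matrix_mult_le)
  then have "(norm (fnet \<sigma> w x))\<^sup>2 \<le> (norm (coordwise \<sigma> (x v* fst w)) * norm (snd w))\<^sup>2"
    by (rule power_mono) simp
  then show ?thesis by (simp add: power_mult_distrib)
qed

lemma fnet_perturbation_le:
  fixes \<sigma> :: "real \<Rightarrow> real" and x :: "real^'d0" and w m :: "(real^'d1^'d0) \<times> (real^'d2^'d1)"
  assumes lip: "\<And>u u'. \<bar>\<sigma> u - \<sigma> u'\<bar> \<le> \<bar>u - u'\<bar>"
  defines "u \<equiv> coordwise \<sigma> (x v* fst w)"
  shows "(norm (fnet \<sigma> w x - fnet \<sigma> m x))\<^sup>2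
     \<le> 2 * (norm (u v* snd w - u v* snd m))\<^sup>2 + 2 * ((norm (snd m))\<^sup>2 * (norm (x v* fst w - x v* fst m))\<^sup>2)"
proof -
  define a where "a = u v* snd w - u v* snd m"
  define b where "b = (u - coordwise \<sigma> (x v* fst m)) v* snd m"
  have "norm b \<le> norm (u - coordwise \<sigma> (x v* fst m)) * norm (snd m)"
    unfolding b_def by (rule norm_vector_matrix_mult_le)
  also have "\<dots> \<le> norm (x v* fst w - x v* fst m) * norm (snd m)"
    unfolding u_def by (intro mult_right_mono norm_coordwise_diff_le[OF lip]) simp
  finally have "(norm b)\<^sup>2 \<le> (norm (x v* fst w - x v* fst m) * norm (snd m))\<^sup>2"
    by (rule power_mono) simp
  then have b: "(norm b)\<^sup>2 \<le> (norm (snd m))\<^sup>2 * (norm (x v* fst w - x v* fst m))\<^sup>2"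
    by (simp add: power_mult_distrib mult.commute)
  have "fnet \<sigma> w x - fnet \<sigma> m x = a + b"
    unfolding fnet_eq_coordwise u_def a_def b_def by (simp add: vector_matrix_mult_diff_distrib)
  moreover have "(norm (a + b))\<^sup>2 \<le> 2 * (norm a)\<^sup>2 + 2 * (norm b)\<^sup>2"
    using power2_norm_add_le[of 1 a b] by simp
  ultimately show ?thesis
    using b unfolding a_def[symmetric] by simp
qed

lemma nn_integral_second_layer_deviation:
  fixes g :: "real^'d1^'d0 \<Rightarrow> real^'d1" and m2 :: "real^'d2^'d1"
  assumes g: "continuous_on UNIV g" and s1: "0 < s1" and s2: "0 < s2"
  shows "(\<integral>\<^sup>+w. ennreal ((norm (g (fst w) v* snd w - g (fst w) v* m2))\<^sup>2) \<partial>(iso_normal m1 s1 \<Otimes>\<^sub>M iso_normal m2 s2))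
    = ennreal (s2\<^sup>2 * real CARD('d2)) * (\<integral>\<^sup>+w1. ennreal ((norm (g w1))\<^sup>2) \<partial>iso_normal m1 s1)"
proof -
  interpret p1: prob_space "iso_normal m1 s1" by (rule prob_space_iso_normal[OF s1])
  interpret p2: prob_space "iso_normal m2 s2" by (rule prob_space_iso_normal[OF s2])
  interpret pair_sigma_finite "iso_normal m1 s1" "iso_normal m2 s2" ..
  have meas: "(\<lambda>w. ennreal ((norm (g (fst w) v* snd w - g (fst w) v* m2))\<^sup>2))
      \<in> borel_measurable (iso_normal m1 s1 \<Otimes>\<^sub>M iso_normal m2 s2)"
    unfolding measurable_cong_sets[OF sets_pair_iso_normal refl]
    by (intro borel_measurable_continuous_onI measurable_compose[OF _ measurable_ennreal]
        continuous_intros continuous_on_compose2[OF g]) auto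
  have meas1: "(\<lambda>w1. ennreal ((norm (g w1))\<^sup>2)) \<in> borel_measurable (iso_normal m1 s1)"
    unfolding measurable_cong_sets[OF sets_iso_normal refl]
    by (intro borel_measurable_continuous_onI measurable_compose[OF _ measurable_ennreal] continuous_intros g)
  have "(\<integral>\<^sup>+w. ennreal ((norm (g (fst w) v* snd w - g (fst w) v* m2))\<^sup>2) \<partial>(iso_normal m1 s1 \<Otimes>\<^sub>M iso_normal m2 s2))
      = (\<integral>\<^sup>+w1. \<integral>\<^sup>+w2. ennreal ((norm (g w1 v* w2 - g w1 v* m2))\<^sup>2) \<partial>iso_normal m2 s2 \<partial>iso_normal m1 s1)"
    using p2.nn_integral_fst[OF meas] by simp
  also have "\<dots> = (\<integral>\<^sup>+w1. ennreal (s2\<^sup>2 * real CARD('d2)) * ennreal ((norm (g w1))\<^sup>2) \<partial>iso_normal m1 s1)"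
    using iso_normal_vector_matrix_centered[OF s2, of m2]
    by (intro nn_integral_cong, subst nn_integral_eq_has_bochner_integral) (auto simp: ennreal_mult[symmetric])
  also have "\<dots> = ennreal (s2\<^sup>2 * real CARD('d2)) * (\<integral>\<^sup>+w1. ennreal ((norm (g w1))\<^sup>2) \<partial>iso_normal m1 s1)"
    by (rule nn_integral_cmult[OF meas1])
  finally show ?thesis .
qed

lemma nn_integral_fnet_deviation_le:
  fixes \<sigma> :: "real \<Rightarrow> real" and x :: "real^'d0" and m1 :: "real^'d1^'d0" and m2 :: "real^'d2^'d1"
  assumes lip: "\<And>u u'. \<bar>\<sigma> u - \<sigma> u'\<bar> \<le> \<bar>u - u'\<bar>" and s1: "0 < s1" and s2: "0 < s2"
    and U: "0 \<le> U" "(\<integral>\<^sup>+w1. ennreal ((norm (coordwise \<sigma> (x v* w1)))\<^sup>2) \<partial>iso_normal m1 s1) \<le> ennreal U"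
  shows "(\<integral>\<^sup>+w. ennreal ((norm (fnet \<sigma> w x - fnet \<sigma> (m1, m2) x))\<^sup>2) \<partial>(iso_normal m1 s1 \<Otimes>\<^sub>M iso_normal m2 s2))
    \<le> ennreal (2 * s2\<^sup>2 * real CARD('d2) * U + 2 * (norm m2)\<^sup>2 * s1\<^sup>2 * real CARD('d1) * (norm x)\<^sup>2)"
proof -
  define u where "u w1 = coordwise \<sigma> (x v* w1)" for w1 :: "real^'d1^'d0"
  have u: "continuous_on UNIV u"
    unfolding u_def by (intro continuous_on_coordwise continuous_on_nonexpansive[OF lip] continuous_intros)
  define F2 where "F2 w1 = (norm m2)\<^sup>2 * (norm (x v* w1 - x v* m1))\<^sup>2" for w1 :: "real^'d1^'d0"
  interpret p2: prob_space "iso_normal m2 s2" by (rule prob_space_iso_normal[OF s2])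
  have F2: "has_bochner_integral (iso_normal m1 s1 \<Otimes>\<^sub>M iso_normal m2 s2) (\<lambda>w. F2 (fst w))
      ((norm m2)\<^sup>2 * (s1\<^sup>2 * real CARD('d1) * (norm x)\<^sup>2))"
    unfolding F2_def
    by (intro has_bochner_integral_pair_fst has_bochner_integral_mult_right
        iso_normal_vector_matrix_centered s1 p2.prob_space_axioms)
  define A where "A w = (norm (u (fst w) v* snd w - u (fst w) v* m2))\<^sup>2"
    for w :: "(real^'d1^'d0) \<times> (real^'d2^'d1)"
  have A_meas: "(\<lambda>w. ennreal (A w)) \<in> borel_measurable (iso_normal m1 s1 \<Otimes>\<^sub>M iso_normal m2 s2)"
    unfolding measurable_cong_sets[OF sets_pair_iso_normal refl] A_def
    by (intro measurable_compose[OF _ measurable_ennreal] borel_measurable_continuous_onI continuous_intros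
        continuous_on_compose2[OF u]) auto
  have B_meas: "(\<lambda>w. ennreal (F2 (fst w))) \<in> borel_measurable (iso_normal m1 s1 \<Otimes>\<^sub>M iso_normal m2 s2)"
    by (rule measurable_compose[OF borel_measurable_has_bochner_integral[OF F2] measurable_ennreal])
  have "(\<integral>\<^sup>+w. ennreal ((norm (fnet \<sigma> w x - fnet \<sigma> (m1, m2) x))\<^sup>2) \<partial>(iso_normal m1 s1 \<Otimes>\<^sub>M iso_normal m2 s2))
      \<le> (\<integral>\<^sup>+w. 2 * ennreal (A w) + 2 * ennreal (F2 (fst w)) \<partial>(iso_normal m1 s1 \<Otimes>\<^sub>M iso_normal m2 s2))"
  proof (rule nn_integral_mono)
    fix w :: "(real^'d1^'d0) \<times> (real^'d2^'d1)"
    have "(norm (fnet \<sigma> w x - fnet \<sigma> (m1, m2) x))\<^sup>2 \<le> 2 * A w + 2 * F2 (fst w)"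
      using fnet_perturbation_le[OF lip, where x = x and w = w and m = "(m1, m2)"]
      unfolding A_def u_def F2_def by simp
    then have "ennreal ((norm (fnet \<sigma> w x - fnet \<sigma> (m1, m2) x))\<^sup>2) \<le> ennreal (2 * A w + 2 * F2 (fst w))"
      by (rule ennreal_leI)
    then show "ennreal ((norm (fnet \<sigma> w x - fnet \<sigma> (m1, m2) x))\<^sup>2) \<le> 2 * ennreal (A w) + 2 * ennreal (F2 (fst w))"
      by (simp add: ennreal_plus ennreal_mult A_def F2_def)
  qed
  also have "\<dots> = 2 * (\<integral>\<^sup>+w. ennreal (A w) \<partial>(iso_normal m1 s1 \<Otimes>\<^sub>M iso_normal m2 s2))
      + 2 * (\<integral>\<^sup>+w. ennreal (F2 (fst w)) \<partial>(iso_normal m1 s1 \<Otimes>\<^sub>M iso_normal m2 s2))"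
    using A_meas B_meas by (simp add: nn_integral_add nn_integral_cmult)
  also have "\<dots> \<le> 2 * (ennreal (s2\<^sup>2 * real CARD('d2)) * ennreal U)
      + 2 * ennreal ((norm m2)\<^sup>2 * (s1\<^sup>2 * real CARD('d1) * (norm x)\<^sup>2))"
    using U(2)[folded u_def] F2 unfolding A_def nn_integral_second_layer_deviation[OF u s1 s2]
    by (subst nn_integral_eq_has_bochner_integral[OF F2]) (auto simp: F2_def intro!: mult_left_mono)
  also have "\<dots> = ennreal (2 * s2\<^sup>2 * real CARD('d2) * U + 2 * (norm m2)\<^sup>2 * s1\<^sup>2 * real CARD('d1) * (norm x)\<^sup>2)"
    using U(1) by (simp add: ennreal_plus ennreal_mult mult_ac)
  finally show ?thesis .
qed

lemma nn_integral_fnet_deviation_le_bounded: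
  fixes \<sigma> :: "real \<Rightarrow> real" and x :: "real^'d0" and m1 :: "real^'d1^'d0" and m2 :: "real^'d2^'d1"
  assumes lip: "\<And>u u'. \<bar>\<sigma> u - \<sigma> u'\<bar> \<le> \<bar>u - u'\<bar>" and bound: "\<And>u. \<bar>\<sigma> u\<bar> \<le> M"
    and s1: "0 < s1" and s2: "0 < s2"
  shows "(\<integral>\<^sup>+w. ennreal ((norm (fnet \<sigma> w x - fnet \<sigma> (m1, m2) x))\<^sup>2) \<partial>(iso_normal m1 s1 \<Otimes>\<^sub>M iso_normal m2 s2))
    \<le> ennreal (2 * s2\<^sup>2 * real CARD('d2) * (real CARD('d1) * M\<^sup>2)
      + 2 * (norm m2)\<^sup>2 * s1\<^sup>2 * real CARD('d1) * (norm x)\<^sup>2)"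
proof -
  interpret prob_space "iso_normal m1 s1" by (rule prob_space_iso_normal[OF s1])
  have "(\<integral>\<^sup>+w1. ennreal ((norm (coordwise \<sigma> (x v* w1)))\<^sup>2) \<partial>iso_normal m1 s1)
      \<le> (\<integral>\<^sup>+w1. ennreal (real CARD('d1) * M\<^sup>2) \<partial>iso_normal m1 s1)"
    by (intro nn_integral_mono ennreal_leI power2_norm_coordwise_le_bound bound)
  also have "\<dots> = ennreal (real CARD('d1) * M\<^sup>2)" using emeasure_space_1 by simp
  finally show ?thesis by (intro nn_integral_fnet_deviation_le[OF lip s1 s2]) auto
qed

lemma nn_integral_fnet_deviation_le_zero:
  fixes \<sigma> :: "real \<Rightarrow> real" and x :: "real^'d0" and m1 :: "real^'d1^'d0" and m2 :: "real^'d2^'d1"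
  assumes lip: "\<And>u u'. \<bar>\<sigma> u - \<sigma> u'\<bar> \<le> \<bar>u - u'\<bar>" and zero: "\<sigma> 0 = 0"
    and s1: "0 < s1" and s2: "0 < s2"
  shows "(\<integral>\<^sup>+w. ennreal ((norm (fnet \<sigma> w x - fnet \<sigma> (m1, m2) x))\<^sup>2) \<partial>(iso_normal m1 s1 \<Otimes>\<^sub>M iso_normal m2 s2))
    \<le> ennreal (2 * s2\<^sup>2 * real CARD('d2) * ((norm (x v* m1))\<^sup>2 + s1\<^sup>2 * real CARD('d1) * (norm x)\<^sup>2)
      + 2 * (norm m2)\<^sup>2 * s1\<^sup>2 * real CARD('d1) * (norm x)\<^sup>2)"
proof -
  have "(\<integral>\<^sup>+w1. ennreal ((norm (coordwise \<sigma> (x v* w1)))\<^sup>2) \<partial>iso_normal m1 s1)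
      \<le> (\<integral>\<^sup>+w1. ennreal ((norm (x v* w1))\<^sup>2) \<partial>iso_normal m1 s1)"
    using norm_coordwise_le[OF lip zero] by (intro nn_integral_mono ennreal_leI power_mono) auto
  also have "\<dots> = ennreal ((norm (x v* m1))\<^sup>2 + s1\<^sup>2 * real CARD('d1) * (norm x)\<^sup>2)"
    using iso_normal_vector_matrix_sq[OF s1, of m1 x] by (subst nn_integral_eq_has_bochner_integral) auto
  finally show ?thesis by (intro nn_integral_fnet_deviation_le[OF lip s1 s2]) auto
qed

lemma P1_pair_iso_normal:
  fixes \<sigma> :: "real \<Rightarrow> real" and X :: "(real^'d0) set"
    and m1 :: "real^'d1^'d0" and m2 :: "real^'d2^'d1"
  assumes lip: "\<And>u u'. \<bar>\<sigma> u - \<sigma> u'\<bar> \<le> \<bar>u - u'\<bar>" and s1: "0 < s1" and s2: "0 < s2"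
  shows "P1 \<sigma> X (iso_normal m1 s1 \<Otimes>\<^sub>M iso_normal m2 s2)"
  unfolding P1_def
proof (intro conjI ballI prob_space_pair_iso_normal s1 s2 sets_pair_iso_normal)
  fix x :: "real^'d0"
  define c0 where "c0 = norm (coordwise \<sigma> (0::real^'d1))"
  define G where "G w = c0\<^sup>2 + (norm x)\<^sup>2 * (norm (fst w))\<^sup>2 + (norm (snd w))\<^sup>2"
    for w :: "(real^'d1^'d0) \<times> (real^'d2^'d1)"
  have bound: "norm (fnet \<sigma> w x) \<le> G w" for w
  proof -
    have "norm (fnet \<sigma> w x) \<le> ((norm x * norm (fst w) + c0)\<^sup>2 + (norm (snd w))\<^sup>2) / 2"
      using norm_fnet_le[OF lip, of w x] sum_squares_bound[of "norm x * norm (fst w) + c0" "norm (snd w)"]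
      unfolding c0_def by (simp add: field_simps)
    also have "\<dots> \<le> (2 * ((norm x)\<^sup>2 * (norm (fst w))\<^sup>2) + 2 * c0\<^sup>2 + (norm (snd w))\<^sup>2) / 2"
      using power2_norm_add_le[of 1 "norm x * norm (fst w)" c0]
      by (intro divide_right_mono add_right_mono) (simp_all add: power_mult_distrib)
    also have "\<dots> \<le> G w" unfolding G_def by simp
    finally show ?thesis .
  qed
  have "has_bochner_integral (iso_normal m1 s1 \<Otimes>\<^sub>M iso_normal m2 s2) G
      (c0\<^sup>2 + (norm x)\<^sup>2 * ((norm m1)\<^sup>2 + s1\<^sup>2 * real DIM(real^'d1^'d0))
        + ((norm m2)\<^sup>2 + s2\<^sup>2 * real DIM(real^'d2^'d1)))"
    unfolding G_def
    by (intro has_bochner_integral_add has_bochner_integral_mult_right has_bochner_integral_const_prob_space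
        has_bochner_integral_pair_fst has_bochner_integral_pair_snd prob_space_pair_iso_normal
        prob_space_iso_normal iso_normal_norm_sq s1 s2)
  then have "(\<integral>\<^sup>+w. ennreal (G w) \<partial>(iso_normal m1 s1 \<Otimes>\<^sub>M iso_normal m2 s2)) < \<infinity>"
    by (subst nn_integral_eq_has_bochner_integral) (auto simp: G_def)
  then show "(\<integral>\<^sup>+w. ennreal (norm (fnet \<sigma> w x)) \<partial>(iso_normal m1 s1 \<Otimes>\<^sub>M iso_normal m2 s2)) < \<infinity>"
    by (rule le_less_trans[rotated]) (intro nn_integral_mono ennreal_leI bound)
qed

section \<open>Second moments of the input distribution\<close>

definition outer_square :: "real^'n \<Rightarrow> real^'n^'n" where
  "outer_square x = (\<chi> i j. x $ i * x $ j)"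

lemma norm_outer_square: "norm (outer_square x) = (norm x)\<^sup>2"
proof -
  have "(norm (outer_square x))\<^sup>2 = ((norm x)\<^sup>2)\<^sup>2"
    by (simp add: power2_norm_matrix_eq_sum power2_norm_vec_eq_sum[of x] outer_square_def
        power_mult_distrib sum_product power2_eq_square[of "\<Sum>k\<in>UNIV. (x $ k)\<^sup>2"])
  then show ?thesis by (metis power2_eq_iff_nonneg norm_ge_zero zero_le_power2)
qed

lemma inner_outer_square_mult: "c \<bullet> (outer_square x *v c) = (x \<bullet> c)\<^sup>2"
  by (simp add: outer_square_def inner_vec_def matrix_vector_mult_def power2_eq_square sum_product
      sum_distrib_left mult_ac)

lemma integral_norm_vector_matrix_mult_le_M2barsq:
  fixes \<mu> :: "(real^'d0) measure" and A :: "real^'d1^'d0"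
  assumes mu_sets: "sets \<mu> = sets (restrict_space borel X)" and M2: "integrable \<mu> (\<lambda>x. (norm x)\<^sup>2)"
  shows "integrable \<mu> (\<lambda>x. (norm (x v* A))\<^sup>2)"
    and "(\<integral>x. (norm (x v* A))\<^sup>2 \<partial>\<mu>) \<le> M2barsq \<mu> * (norm A)\<^sup>2"
proof -
  define S where "S = (\<integral>x. outer_square x \<partial>\<mu>)"
  have quadratic: "bounded_linear (\<lambda>T::real^'d0^'d0. c \<bullet> (T *v c))" for c
  proof -
    have "linear (\<lambda>T::real^'d0^'d0. c \<bullet> (T *v c))"
      by (rule linearI) (simp_all add: matrix_vector_mult_add_rdistrib inner_add_right
          matrix_vector_mult_def inner_vec_def sum_distrib_left mult_ac sum.distrib distrib_left)
    then show ?thesis by (simp add: linear_conv_bounded_linear)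
  qed
  have "outer_square \<in> borel_measurable \<mu>"
    unfolding outer_square_def
    by (intro borel_measurable_restrict_borel[OF mu_sets] borel_measurable_continuous_onI continuous_intros)
  then have outer_int: "integrable \<mu> outer_square"
    by (rule Bochner_Integration.integrable_bound[OF M2]) (simp add: norm_outer_square)
  have eq: "(norm (x v* A))\<^sup>2 = (\<Sum>k\<in>UNIV. column k A \<bullet> (outer_square x *v column k A))" for x :: "real^'d0"
    by (simp add: power2_norm_vec_eq_sum vector_matrix_mult_component inner_outer_square_mult)
  have "has_bochner_integral \<mu> (\<lambda>x. (norm (x v* A))\<^sup>2) (\<Sum>k\<in>UNIV. column k A \<bullet> (S *v column k A))"
    unfolding eq S_def
    by (intro has_bochner_integral_sum has_bochner_integral_bounded_linear[OF quadratic]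
        has_bochner_integral_integrable outer_int)
  moreover have "column k A \<bullet> (S *v column k A) \<le> M2barsq \<mu> * (norm (column k A))\<^sup>2" for k
  proof -
    have "column k A \<bullet> (S *v column k A) \<le> norm (column k A) * norm (S *v column k A)"
      by (rule Cauchy_Schwarz_ineq2[THEN order_trans[OF abs_ge_self]])
    also have "\<dots> \<le> norm (column k A) * (onorm (\<lambda>v. S *v v) * norm (column k A))"
      by (intro mult_left_mono onorm) (simp_all add: linear_conv_bounded_linear[symmetric])
    finally show ?thesis
      by (simp add: M2barsq_def S_def outer_square_def power2_eq_square mult_ac)
  qed
  ultimately show "integrable \<mu> (\<lambda>x. (norm (x v* A))\<^sup>2)"
    and "(\<integral>x. (norm (x v* A))\<^sup>2 \<partial>\<mu>) \<le> M2barsq \<mu> * (norm A)\<^sup>2"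
    by (auto simp: has_bochner_integral_iff power2_norm_matrix_eq_sum_columns[of A] sum_distrib_left
        intro!: sum_mono)
qed

lemma M2barsq_nonneg: "0 \<le> M2barsq \<mu>"
  unfolding M2barsq_def by (rule onorm_pos_le) (simp add: linear_conv_bounded_linear[symmetric])

lemma M2sq_nonneg: "0 \<le> M2sq \<mu>"
  unfolding M2sq_def by (simp add: integral_nonneg_AE)

section \<open>The oracle inequality\<close>

lemma L2sq_diff_finite:
  fixes f g :: "'a \<Rightarrow> real^'n"
  assumes [measurable]: "f \<in> borel_measurable \<mu>" "g \<in> borel_measurable \<mu>"
    and "L2sq \<mu> f < \<infinity>" "L2sq \<mu> g < \<infinity>"
  shows "L2sq \<mu> (\<lambda>x. f x - g x) < \<infinity>"
proof -
  have "L2sq \<mu> (\<lambda>x. f x - g x) \<le> (\<integral>\<^sup>+x. 2 * ennreal ((norm (f x))\<^sup>2) + 2 * ennreal ((norm (g x))\<^sup>2) \<partial>\<mu>)"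
    unfolding L2sq_def
  proof (intro nn_integral_mono)
    fix x
    have "(norm (f x - g x))\<^sup>2 \<le> 2 * (norm (f x))\<^sup>2 + 2 * (norm (g x))\<^sup>2"
      using power2_norm_add_le[of 1 "f x" "- g x"] by simp
    then have "ennreal ((norm (f x - g x))\<^sup>2) \<le> ennreal (2 * (norm (f x))\<^sup>2 + 2 * (norm (g x))\<^sup>2)"
      by (rule ennreal_leI)
    then show "ennreal ((norm (f x - g x))\<^sup>2) \<le> 2 * ennreal ((norm (f x))\<^sup>2) + 2 * ennreal ((norm (g x))\<^sup>2)"
      by (simp add: ennreal_plus ennreal_mult)
  qed
  also have "\<dots> = 2 * L2sq \<mu> f + 2 * L2sq \<mu> g"
    unfolding L2sq_def by (subst nn_integral_add) (auto simp: nn_integral_cmult)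
  also have "\<dots> < \<infinity>" using assms(3,4) by (simp add: ennreal_mult_less_top)
  finally show ?thesis .
qed

lemma L2sq_fnet_finite_bounded:
  fixes \<sigma> :: "real \<Rightarrow> real" and \<mu> :: "(real^'d0) measure" and w :: "(real^'d1^'d0) \<times> (real^'d2^'d1)"
  assumes bound: "\<And>u. \<bar>\<sigma> u\<bar> \<le> M" and mu_sets: "sets \<mu> = sets (restrict_space borel X)"
    and finite: "emeasure \<mu> X < \<infinity>"
  shows "L2sq \<mu> (fnet \<sigma> w) < \<infinity>"
proof -
  have "L2sq \<mu> (fnet \<sigma> w) \<le> (\<integral>\<^sup>+x. ennreal (real CARD('d1) * M\<^sup>2 * (norm (snd w))\<^sup>2) \<partial>\<mu>)"
    unfolding L2sq_def
  proof (intro nn_integral_mono ennreal_leI)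
    fix x
    have "(norm (coordwise \<sigma> (x v* fst w)))\<^sup>2 \<le> real CARD('d1) * M\<^sup>2"
      by (rule power2_norm_coordwise_le_bound[OF bound])
    then show "(norm (fnet \<sigma> w x))\<^sup>2 \<le> real CARD('d1) * M\<^sup>2 * (norm (snd w))\<^sup>2"
      using order_trans[OF power2_norm_fnet_le mult_right_mono[OF _ zero_le_power2]] by blast
  qed
  also have "\<dots> < \<infinity>"
    using finite sets_eq_imp_space_eq[OF mu_sets] by (simp add: ennreal_mult_less_top space_restrict_space)
  finally show ?thesis .
qed

lemma L2sq_fnet_finite_zero:
  fixes \<sigma> :: "real \<Rightarrow> real" and \<mu> :: "(real^'d0) measure" and w :: "(real^'d1^'d0) \<times> (real^'d2^'d1)"
  assumes lip: "\<And>u u'. \<bar>\<sigma> u - \<sigma> u'\<bar> \<le> \<bar>u - u'\<bar>" and zero: "\<sigma> 0 = 0"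
    and M2: "integrable \<mu> (\<lambda>x. (norm x)\<^sup>2)"
  shows "L2sq \<mu> (fnet \<sigma> w) < \<infinity>"
proof -
  have "(norm (fnet \<sigma> w x))\<^sup>2 \<le> (norm (fst w))\<^sup>2 * (norm (snd w))\<^sup>2 * (norm x)\<^sup>2" for x
  proof -
    have "norm (coordwise \<sigma> (x v* fst w)) \<le> norm x * norm (fst w)"
      using norm_coordwise_le[OF lip zero, of "x v* fst w"] norm_vector_matrix_mult_le[of x "fst w"] by linarith
    then have "(norm (coordwise \<sigma> (x v* fst w)))\<^sup>2 \<le> (norm x * norm (fst w))\<^sup>2"
      by (rule power_mono) simp
    then have "(norm (coordwise \<sigma> (x v* fst w)))\<^sup>2 \<le> (norm x)\<^sup>2 * (norm (fst w))\<^sup>2"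
      by (simp add: power_mult_distrib)
    then have "(norm (coordwise \<sigma> (x v* fst w)))\<^sup>2 * (norm (snd w))\<^sup>2
        \<le> (norm x)\<^sup>2 * (norm (fst w))\<^sup>2 * (norm (snd w))\<^sup>2"
      by (rule mult_right_mono) simp
    from order_trans[OF power2_norm_fnet_le[of \<sigma> w x] this] show ?thesis
      by (simp add: mult_ac)
  qed
  then have "L2sq \<mu> (fnet \<sigma> w) \<le> (\<integral>\<^sup>+x. ennreal ((norm (fst w))\<^sup>2 * (norm (snd w))\<^sup>2 * (norm x)\<^sup>2) \<partial>\<mu>)"
    unfolding L2sq_def by (intro nn_integral_mono ennreal_leI)
  also have "\<dots> = ennreal (\<integral>x. (norm (fst w))\<^sup>2 * (norm (snd w))\<^sup>2 * (norm x)\<^sup>2 \<partial>\<mu>)"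
    by (intro nn_integral_eq_integral integrable_mult_right M2) auto
  finally show ?thesis by (simp add: le_less_trans)
qed

lemma borel_measurable_fnet_deviation:
  fixes \<sigma> :: "real \<Rightarrow> real" and \<mu> :: "(real^'d0) measure"
    and p :: "((real^'d1^'d0) \<times> (real^'d2^'d1)) measure"
  assumes c: "continuous_on UNIV \<sigma>" and p: "sets p = sets borel"
    and mu_sets: "sets \<mu> = sets (restrict_space borel X)"
  shows "(\<lambda>(w, x). ennreal ((norm (fnet \<sigma> w x - fnet \<sigma> m x))\<^sup>2)) \<in> borel_measurable (p \<Otimes>\<^sub>M \<mu>)"
proof -
  have "(\<lambda>z. (norm (fnet \<sigma> (fst z) (snd z) - fnet \<sigma> m (snd z)))\<^sup>2) \<in> borel_measurable (borel \<Otimes>\<^sub>M borel)"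
    unfolding borel_prod fnet_eq_coordwise
    by (intro borel_measurable_continuous_onI continuous_intros continuous_on_coordwise[OF c])
  moreover have "(\<lambda>z. z) \<in> measurable \<mu> borel"
    by (rule borel_measurable_restrict_borel[OF mu_sets]) simp
  then have "(\<lambda>z. (fst z, snd z)) \<in> measurable (p \<Otimes>\<^sub>M \<mu>) (borel \<Otimes>\<^sub>M borel)"
    using measurable_ident_sets[OF p] by measurable
  from measurable_compose[OF this \<open>_ \<in> borel_measurable (borel \<Otimes>\<^sub>M borel)\<close>]
  show ?thesis
    unfolding split_beta' by (simp add: measurable_compose[OF _ measurable_ennreal])
qed

lemma nn_integral_L2sq_fnet_young:
  fixes \<sigma> :: "real \<Rightarrow> real" and \<mu> :: "(real^'d0) measure"
    and p :: "((real^'d1^'d0) \<times> (real^'d2^'d1)) measure" and fP :: "real^'d0 \<Rightarrow> real^'d2"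
  assumes c: "continuous_on UNIV \<sigma>" and p: "prob_space p" "sets p = sets borel"
    and mu_sets: "sets \<mu> = sets (restrict_space borel X)" and mu_sf: "sigma_finite_measure \<mu>"
    and fP: "fP \<in> borel_measurable \<mu>" and l: "0 < l"
  shows "(\<integral>\<^sup>+w. L2sq \<mu> (\<lambda>x. fnet \<sigma> w x - fP x) \<partial>p)
    \<le> ennreal (1 + 1 / l) * (\<integral>\<^sup>+x. \<integral>\<^sup>+w. ennreal ((norm (fnet \<sigma> w x - fnet \<sigma> m x))\<^sup>2) \<partial>p \<partial>\<mu>)
      + ennreal (1 + l) * L2sq \<mu> (\<lambda>x. fnet \<sigma> m x - fP x)"
proof -
  interpret p: prob_space p by fact
  interpret mu: sigma_finite_measure \<mu> by fact
  interpret pair_sigma_finite p \<mu> ..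
  define D where "D w x = ennreal ((norm (fnet \<sigma> w x - fnet \<sigma> m x))\<^sup>2)"
    for w :: "(real^'d1^'d0) \<times> (real^'d2^'d1)" and x :: "real^'d0"
  have D_meas: "(\<lambda>(w, x). D w x) \<in> borel_measurable (p \<Otimes>\<^sub>M \<mu>)"
    unfolding D_def by (rule borel_measurable_fnet_deviation[OF c p(2) mu_sets])
  have fnet_meas: "fnet \<sigma> w \<in> borel_measurable \<mu>" for w
    by (rule borel_measurable_fnet[OF mu_sets c])
  have pointwise: "L2sq \<mu> (\<lambda>x. fnet \<sigma> w x - fP x)
      \<le> ennreal (1 + 1 / l) * (\<integral>\<^sup>+x. D w x \<partial>\<mu>) + ennreal (1 + l) * L2sq \<mu> (\<lambda>x. fnet \<sigma> m x - fP x)" for w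
  proof -
    have "L2sq \<mu> (\<lambda>x. fnet \<sigma> w x - fP x)
        \<le> (\<integral>\<^sup>+x. ennreal (1 + 1 / l) * D w x + ennreal (1 + l) * ennreal ((norm (fnet \<sigma> m x - fP x))\<^sup>2) \<partial>\<mu>)"
      unfolding L2sq_def D_def
    proof (intro nn_integral_mono)
      fix x
      have "(norm (fnet \<sigma> w x - fP x))\<^sup>2
          \<le> (1 + 1 / l) * (norm (fnet \<sigma> w x - fnet \<sigma> m x))\<^sup>2 + (1 + l) * (norm (fnet \<sigma> m x - fP x))\<^sup>2"
        using power2_norm_add_le[OF l, of "fnet \<sigma> w x - fnet \<sigma> m x" "fnet \<sigma> m x - fP x"] by simp
      then show "ennreal ((norm (fnet \<sigma> w x - fP x))\<^sup>2)
          \<le> ennreal (1 + 1 / l) * ennreal ((norm (fnet \<sigma> w x - fnet \<sigma> m x))\<^sup>2)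
            + ennreal (1 + l) * ennreal ((norm (fnet \<sigma> m x - fP x))\<^sup>2)"
        using l by (simp add: ennreal_leI ennreal_mult[symmetric] ennreal_plus[symmetric] del: ennreal_plus)
    qed
    also have "\<dots> = ennreal (1 + 1 / l) * (\<integral>\<^sup>+x. D w x \<partial>\<mu>) + ennreal (1 + l) * L2sq \<mu> (\<lambda>x. fnet \<sigma> m x - fP x)"
      unfolding D_def L2sq_def using fnet_meas[of w] fnet_meas[of m] fP
      by (subst nn_integral_add) (auto simp: nn_integral_cmult)
    finally show ?thesis .
  qed
  have "(\<integral>\<^sup>+w. L2sq \<mu> (\<lambda>x. fnet \<sigma> w x - fP x) \<partial>p)
      \<le> (\<integral>\<^sup>+w. ennreal (1 + 1 / l) * (\<integral>\<^sup>+x. D w x \<partial>\<mu>) + ennreal (1 + l) * L2sq \<mu> (\<lambda>x. fnet \<sigma> m x - fP x) \<partial>p)"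
    by (intro nn_integral_mono pointwise)
  also have "\<dots> = ennreal (1 + 1 / l) * (\<integral>\<^sup>+w. \<integral>\<^sup>+x. D w x \<partial>\<mu> \<partial>p) + ennreal (1 + l) * L2sq \<mu> (\<lambda>x. fnet \<sigma> m x - fP x)"
    using mu.borel_measurable_nn_integral[OF D_meas]
    by (subst nn_integral_add) (auto simp: nn_integral_cmult p.emeasure_space_1)
  also have "(\<integral>\<^sup>+w. \<integral>\<^sup>+x. D w x \<partial>\<mu> \<partial>p) = (\<integral>\<^sup>+x. \<integral>\<^sup>+w. D w x \<partial>p \<partial>\<mu>)"
    using Fubini'[OF D_meas] by simp
  finally show ?thesis unfolding D_def .
qed

lemma KL_gauss_posterior_le:
  fixes m1 :: "real^'d1^'d0" and m2 :: "real^'d2^'d1"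
  assumes rho: "0 < \<rho>1" "0 < \<rho>2" and t: "0 < t" "t \<le> 1"
    and m1: "norm m1 \<le> \<rho>1 * sqrt (2 * real CARD('d0) * real CARD('d1))"
    and m2: "norm m2 \<le> \<rho>2 * sqrt (2 * real CARD('d1) * real CARD('d2))"
  defines "p \<equiv> iso_normal m1 (sqrt t * \<rho>1) \<Otimes>\<^sub>M iso_normal m2 (sqrt t * \<rho>2)"
  shows "KL_finite p (gauss_prior \<rho>1 \<rho>2)"
    and "KL p (gauss_prior \<rho>1 \<rho>2)
      \<le> real (CARD('d0) * CARD('d1) + CARD('d1) * CARD('d2)) * ((t + 1 - ln t) / 2)"
proof -
  have scales: "0 < sqrt t * \<rho>1" "0 < sqrt t * \<rho>2" using rho t by auto
  note KL = KL_pair_iso_normal[OF scales rho, of m1 m2, folded p_def gauss_prior_eq_pair_iso_normal[OF rho(2)]]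
  show "KL_finite p (gauss_prior \<rho>1 \<rho>2)" by (rule KL(1))
  have "(norm m1)\<^sup>2 \<le> 2 * \<rho>1\<^sup>2 * real DIM(real^'d1^'d0)" "(norm m2)\<^sup>2 \<le> 2 * \<rho>2\<^sup>2 * real DIM(real^'d2^'d1)"
    using power_mono[OF m1, of 2] power_mono[OF m2, of 2] rho by (simp_all add: power_mult_distrib)
  then have "iso_normal_KL m1 (sqrt t * \<rho>1) \<rho>1 + iso_normal_KL m2 (sqrt t * \<rho>2) \<rho>2
      \<le> real DIM(real^'d1^'d0) * ((t + 1 - ln t) / 2) + real DIM(real^'d2^'d1) * ((t + 1 - ln t) / 2)"
    by (intro add_mono iso_normal_KL_scaled_le rho t)
  then show "KL p (gauss_prior \<rho>1 \<rho>2) \<le> real (CARD('d0) * CARD('d1) + CARD('d1) * CARD('d2)) * ((t + 1 - ln t) / 2)"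
    unfolding KL(2) by (simp add: algebra_simps)
qed

lemma risk_le_gauss_posterior:
  fixes \<sigma> :: "real \<Rightarrow> real" and X :: "(real^'d0) set" and \<mu> :: "(real^'d0) measure"
    and fhat :: "'z \<Rightarrow> real^'d0 \<Rightarrow> real^'d2" and fP :: "real^'d0 \<Rightarrow> real^'d2"
    and m1 :: "real^'d1^'d0" and m2 :: "real^'d2^'d1"
  assumes lip: "\<And>u u'. \<bar>\<sigma> u - \<sigma> u'\<bar> \<le> \<bar>u - u'\<bar>"
    and rho: "0 < \<rho>1" "0 < \<rho>2" and t: "0 < t" "t \<le> 1" and beta: "0 \<le> \<beta>"
    and m1: "norm m1 \<le> \<rho>1 * sqrt (2 * real CARD('d0) * real CARD('d1))"
    and m2: "norm m2 \<le> \<rho>2 * sqrt (2 * real CARD('d1) * real CARD('d2))"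
    and pb: "pac_bayes_bound P \<mu> X \<sigma> fhat fP (gauss_prior \<rho>1 \<rho>2 :: ((real^'d1^'d0) \<times> (real^'d2^'d1)) measure) \<beta> n C"
  defines "p \<equiv> iso_normal m1 (sqrt t * \<rho>1) \<Otimes>\<^sub>M iso_normal m2 (sqrt t * \<rho>2)"
  shows "risk P \<mu> fhat fP \<le> ennreal C * ((\<integral>\<^sup>+w. L2sq \<mu> (\<lambda>x. fnet \<sigma> w x - fP x) \<partial>p)
    + ennreal (\<beta> / real n * (real (CARD('d0) * CARD('d1) + CARD('d1) * CARD('d2)) * ((t + 1 - ln t) / 2))))"
proof -
  note KL = KL_gauss_posterior_le[OF rho t m1 m2, folded p_def]
  have "P1 \<sigma> X p"
    unfolding p_def using rho t by (intro P1_pair_iso_normal lip) auto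
  then have "risk P \<mu> fhat fP
      \<le> ennreal C * ((\<integral>\<^sup>+w. L2sq \<mu> (\<lambda>x. fnet \<sigma> w x - fP x) \<partial>p) + ennreal (\<beta> / real n * KL p (gauss_prior \<rho>1 \<rho>2)))"
    using pb KL(1) unfolding pac_bayes_bound_def by blast
  also have "\<dots> \<le> ennreal C * ((\<integral>\<^sup>+w. L2sq \<mu> (\<lambda>x. fnet \<sigma> w x - fP x) \<partial>p)
      + ennreal (\<beta> / real n * (real (CARD('d0) * CARD('d1) + CARD('d1) * CARD('d2)) * ((t + 1 - ln t) / 2))))"
    using KL(2) beta by (intro mult_left_mono add_left_mono ennreal_leI mult_left_mono) auto
  finally show ?thesis .
qed

lemma nn_integral_posterior_deviation_le_bounded:
  fixes \<sigma> :: "real \<Rightarrow> real" and \<mu> :: "(real^'d0) measure" and m1 :: "real^'d1^'d0" and m2 :: "real^'d2^'d1"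
    and \<rho>1 \<rho>2 t M :: real
  defines "B1 \<equiv> \<rho>1 * sqrt (2 * real CARD('d0) * real CARD('d1))"
    and "B2 \<equiv> \<rho>2 * sqrt (2 * real CARD('d1) * real CARD('d2))"
  assumes lip: "\<And>u u'. \<bar>\<sigma> u - \<sigma> u'\<bar> \<le> \<bar>u - u'\<bar>" and bound: "\<And>u. \<bar>\<sigma> u\<bar> \<le> M"
    and mu_sets: "sets \<mu> = sets (restrict_space borel X)" and finite: "emeasure \<mu> X < \<infinity>"
    and M2: "integrable \<mu> (\<lambda>x. (norm x)\<^sup>2)"
    and rho: "0 < \<rho>1" "0 < \<rho>2" and t: "0 < t" and m2: "norm m2 \<le> B2"
  shows "(\<integral>\<^sup>+x. \<integral>\<^sup>+w. ennreal ((norm (fnet \<sigma> w x - fnet \<sigma> (m1, m2) x))\<^sup>2)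
      \<partial>(iso_normal m1 (sqrt t * \<rho>1) \<Otimes>\<^sub>M iso_normal m2 (sqrt t * \<rho>2)) \<partial>\<mu>)
    \<le> ennreal (t * (3 * B2\<^sup>2 * (B1\<^sup>2 * M2sq \<mu> + measure \<mu> X * M\<^sup>2)) / 2)"
proof -
  define D0 D1 D2 where "D0 = real CARD('d0)" and "D1 = real CARD('d1)" and "D2 = real CARD('d2)"
  have D: "1 \<le> D0" "1 \<le> D1" "1 \<le> D2" unfolding D0_def D1_def D2_def by (simp_all add: Suc_leI)
  have B1sq: "B1\<^sup>2 = 2 * \<rho>1\<^sup>2 * D0 * D1" and B2sq: "B2\<^sup>2 = 2 * \<rho>2\<^sup>2 * D1 * D2"
    unfolding B1_def B2_def D0_def D1_def D2_def by (simp_all add: power_mult_distrib)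
  have s: "0 < sqrt t * \<rho>1" "0 < sqrt t * \<rho>2" using t rho by simp_all
  have s_sq: "(sqrt t * \<rho>1)\<^sup>2 = t * \<rho>1\<^sup>2" "(sqrt t * \<rho>2)\<^sup>2 = t * \<rho>2\<^sup>2"
    using t by (simp_all add: power_mult_distrib)
  define k0 where "k0 = t * B2\<^sup>2 * M\<^sup>2"
  define k1 where "k1 = 2 * t * \<rho>1\<^sup>2 * D1 * (norm m2)\<^sup>2"
  have k: "0 \<le> k0" "0 \<le> k1" unfolding k0_def k1_def using t D by simp_all
  have "(\<integral>\<^sup>+w. ennreal ((norm (fnet \<sigma> w x - fnet \<sigma> (m1, m2) x))\<^sup>2)
      \<partial>(iso_normal m1 (sqrt t * \<rho>1) \<Otimes>\<^sub>M iso_normal m2 (sqrt t * \<rho>2))) \<le> ennreal (k0 + k1 * (norm x)\<^sup>2)" for x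
    using nn_integral_fnet_deviation_le_bounded[OF lip bound s, of m1 m2 x]
    unfolding k0_def k1_def B2sq s_sq D1_def D2_def by (simp add: mult_ac)
  then have "(\<integral>\<^sup>+x. \<integral>\<^sup>+w. ennreal ((norm (fnet \<sigma> w x - fnet \<sigma> (m1, m2) x))\<^sup>2)
      \<partial>(iso_normal m1 (sqrt t * \<rho>1) \<Otimes>\<^sub>M iso_normal m2 (sqrt t * \<rho>2)) \<partial>\<mu>)
      \<le> (\<integral>\<^sup>+x. ennreal (k0 + k1 * (norm x)\<^sup>2) \<partial>\<mu>)"
    by (intro nn_integral_mono)
  also have "\<dots> = ennreal (k0 * measure \<mu> X + k1 * (D0 * M2sq \<mu>))"
  proof -
    have space: "space \<mu> = X" using sets_eq_imp_space_eq[OF mu_sets] by (simp add: space_restrict_space)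
    interpret finite_measure \<mu> by (rule finite_measureI) (use finite space in simp)
    have "has_bochner_integral \<mu> (\<lambda>x. k0 + k1 * (norm x)\<^sup>2) (measure \<mu> X * k0 + k1 * (\<integral>x. (norm x)\<^sup>2 \<partial>\<mu>))"
      using M2 space by (intro has_bochner_integral_add has_bochner_integral_mult_right)
        (auto simp: has_bochner_integral_iff)
    moreover have "(\<integral>x. (norm x)\<^sup>2 \<partial>\<mu>) = D0 * M2sq \<mu>"
      unfolding M2sq_def D0_def by simp
    ultimately show ?thesis
      using k by (subst nn_integral_eq_has_bochner_integral) (auto simp: mult.commute)
  qed
  also have "\<dots> \<le> ennreal (t * (3 * B2\<^sup>2 * (B1\<^sup>2 * M2sq \<mu> + measure \<mu> X * M\<^sup>2)) / 2)"
  proof (rule ennreal_leI)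
    have "k1 * (D0 * M2sq \<mu>) = (norm m2)\<^sup>2 * (t * B1\<^sup>2 * M2sq \<mu>)"
      unfolding k1_def B1sq by (simp add: mult_ac)
    also have "\<dots> \<le> B2\<^sup>2 * (t * B1\<^sup>2 * M2sq \<mu>)"
      using power_mono[OF m2, of 2] t M2sq_nonneg[of \<mu>] by (intro mult_right_mono) auto
    finally have "k0 * measure \<mu> X + k1 * (D0 * M2sq \<mu>) \<le> t * B2\<^sup>2 * (B1\<^sup>2 * M2sq \<mu> + measure \<mu> X * M\<^sup>2)"
      unfolding k0_def by (simp add: algebra_simps)
    moreover have "0 \<le> t * B2\<^sup>2 * (B1\<^sup>2 * M2sq \<mu> + measure \<mu> X * M\<^sup>2)"
      using t M2sq_nonneg[of \<mu>] by simp
    ultimately show "k0 * measure \<mu> X + k1 * (D0 * M2sq \<mu>)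
        \<le> t * (3 * B2\<^sup>2 * (B1\<^sup>2 * M2sq \<mu> + measure \<mu> X * M\<^sup>2)) / 2"
      by simp
  qed
  finally show ?thesis .
qed

lemma nn_integral_posterior_deviation_le_zero:
  fixes \<sigma> :: "real \<Rightarrow> real" and \<mu> :: "(real^'d0) measure" and m1 :: "real^'d1^'d0" and m2 :: "real^'d2^'d1"
    and \<rho>1 \<rho>2 t :: real
  defines "B1 \<equiv> \<rho>1 * sqrt (2 * real CARD('d0) * real CARD('d1))"
    and "B2 \<equiv> \<rho>2 * sqrt (2 * real CARD('d1) * real CARD('d2))"
  assumes lip: "\<And>u u'. \<bar>\<sigma> u - \<sigma> u'\<bar> \<le> \<bar>u - u'\<bar>" and zero: "\<sigma> 0 = 0"
    and mu_sets: "sets \<mu> = sets (restrict_space borel X)" and M2: "integrable \<mu> (\<lambda>x. (norm x)\<^sup>2)"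
    and rho: "0 < \<rho>1" "0 < \<rho>2" and t: "0 < t" "t \<le> 1" and m1: "norm m1 \<le> B1" and m2: "norm m2 \<le> B2"
  shows "(\<integral>\<^sup>+x. \<integral>\<^sup>+w. ennreal ((norm (fnet \<sigma> w x - fnet \<sigma> (m1, m2) x))\<^sup>2)
      \<partial>(iso_normal m1 (sqrt t * \<rho>1) \<Otimes>\<^sub>M iso_normal m2 (sqrt t * \<rho>2)) \<partial>\<mu>)
    \<le> ennreal (t * (3 * B1\<^sup>2 * B2\<^sup>2 * (M2sq \<mu> + M2barsq \<mu> / real CARD('d1))) / 2)"
proof -
  define D0 D1 D2 where "D0 = real CARD('d0)" and "D1 = real CARD('d1)" and "D2 = real CARD('d2)"
  have D: "1 \<le> D0" "1 \<le> D1" "1 \<le> D2" unfolding D0_def D1_def D2_def by (simp_all add: Suc_leI)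
  have B1sq: "B1\<^sup>2 = 2 * \<rho>1\<^sup>2 * D0 * D1" and B2sq: "B2\<^sup>2 = 2 * \<rho>2\<^sup>2 * D1 * D2"
    unfolding B1_def B2_def D0_def D1_def D2_def by (simp_all add: power_mult_distrib)
  have s: "0 < sqrt t * \<rho>1" "0 < sqrt t * \<rho>2" using t rho by simp_all
  have s_sq: "(sqrt t * \<rho>1)\<^sup>2 = t * \<rho>1\<^sup>2" "(sqrt t * \<rho>2)\<^sup>2 = t * \<rho>2\<^sup>2"
    using t by (simp_all add: power_mult_distrib)
  define g where "g x = 2 * (t * \<rho>2\<^sup>2) * D2 * ((norm (x v* m1))\<^sup>2 + t * \<rho>1\<^sup>2 * D1 * (norm x)\<^sup>2)
    + 2 * (norm m2)\<^sup>2 * (t * \<rho>1\<^sup>2) * D1 * (norm x)\<^sup>2" for x :: "real^'d0"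
  note M2bar = integral_norm_vector_matrix_mult_le_M2barsq[OF mu_sets M2, of m1]
  have "(\<integral>\<^sup>+w. ennreal ((norm (fnet \<sigma> w x - fnet \<sigma> (m1, m2) x))\<^sup>2)
      \<partial>(iso_normal m1 (sqrt t * \<rho>1) \<Otimes>\<^sub>M iso_normal m2 (sqrt t * \<rho>2))) \<le> ennreal (g x)" for x
    using nn_integral_fnet_deviation_le_zero[OF lip zero s, of m1 m2 x]
    unfolding g_def s_sq D1_def D2_def by simp
  then have "(\<integral>\<^sup>+x. \<integral>\<^sup>+w. ennreal ((norm (fnet \<sigma> w x - fnet \<sigma> (m1, m2) x))\<^sup>2)
      \<partial>(iso_normal m1 (sqrt t * \<rho>1) \<Otimes>\<^sub>M iso_normal m2 (sqrt t * \<rho>2)) \<partial>\<mu>) \<le> (\<integral>\<^sup>+x. ennreal (g x) \<partial>\<mu>)"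
    by (intro nn_integral_mono)
  also have "\<dots> = ennreal (2 * (t * \<rho>2\<^sup>2) * D2 * ((\<integral>x. (norm (x v* m1))\<^sup>2 \<partial>\<mu>) + t * \<rho>1\<^sup>2 * D1 * (D0 * M2sq \<mu>))
      + 2 * (norm m2)\<^sup>2 * (t * \<rho>1\<^sup>2) * D1 * (D0 * M2sq \<mu>))"
  proof -
    have "(\<integral>x. (norm x)\<^sup>2 \<partial>\<mu>) = D0 * M2sq \<mu>" unfolding M2sq_def D0_def by simp
    moreover have "has_bochner_integral \<mu> g
        (2 * (t * \<rho>2\<^sup>2) * D2 * ((\<integral>x. (norm (x v* m1))\<^sup>2 \<partial>\<mu>) + t * \<rho>1\<^sup>2 * D1 * (\<integral>x. (norm x)\<^sup>2 \<partial>\<mu>))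
          + 2 * (norm m2)\<^sup>2 * (t * \<rho>1\<^sup>2) * D1 * (\<integral>x. (norm x)\<^sup>2 \<partial>\<mu>))"
      unfolding g_def using M2 M2bar(1)
      by (intro has_bochner_integral_add has_bochner_integral_mult_right) (auto simp: has_bochner_integral_iff)
    ultimately show ?thesis
      using t D by (subst nn_integral_eq_has_bochner_integral) (auto simp: g_def)
  qed
  also have "\<dots> \<le> ennreal (t * (3 * B1\<^sup>2 * B2\<^sup>2 * (M2sq \<mu> + M2barsq \<mu> / real CARD('d1))) / 2)"
  proof (rule ennreal_leI)
    define Q where "Q = t * B1\<^sup>2 * B2\<^sup>2"
    have M: "0 \<le> M2sq \<mu>" "0 \<le> M2barsq \<mu>" by (rule M2sq_nonneg, rule M2barsq_nonneg)
    have "2 * (t * \<rho>2\<^sup>2) * D2 * (\<integral>x. (norm (x v* m1))\<^sup>2 \<partial>\<mu>) \<le> 2 * (t * \<rho>2\<^sup>2) * D2 * (M2barsq \<mu> * B1\<^sup>2)"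
      using M2bar(2) mult_left_mono[OF power_mono[OF m1] M(2)] t D
      by (intro mult_left_mono) (auto simp: order_trans)
    also have "\<dots> = Q * M2barsq \<mu> / D1"
      unfolding Q_def B2sq using D by (simp add: field_simps)
    finally have I1: "2 * (t * \<rho>2\<^sup>2) * D2 * (\<integral>x. (norm (x v* m1))\<^sup>2 \<partial>\<mu>) \<le> Q * M2barsq \<mu> / D1" .
    have "2 * (t * \<rho>2\<^sup>2) * D2 * (t * \<rho>1\<^sup>2 * D1 * (D0 * M2sq \<mu>)) = t * (Q * M2sq \<mu> / (2 * D1))"
      unfolding Q_def B1sq B2sq using D by (simp add: field_simps power2_eq_square)
    also have "\<dots> \<le> Q * M2sq \<mu> / (2 * D1)"
      using t D M unfolding Q_def by (intro mult_left_le_one_le) auto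
    also have "\<dots> \<le> Q * M2sq \<mu> / 2"
      using t D M unfolding Q_def by (intro divide_left_mono) auto
    finally have I2: "2 * (t * \<rho>2\<^sup>2) * D2 * (t * \<rho>1\<^sup>2 * D1 * (D0 * M2sq \<mu>)) \<le> Q * M2sq \<mu> / 2" .
    have "2 * (norm m2)\<^sup>2 * (t * \<rho>1\<^sup>2) * D1 * (D0 * M2sq \<mu>) = (norm m2)\<^sup>2 * (t * B1\<^sup>2 * M2sq \<mu>)"
      unfolding B1sq by (simp add: algebra_simps)
    also have "\<dots> \<le> B2\<^sup>2 * (t * B1\<^sup>2 * M2sq \<mu>)"
      using power_mono[OF m2, of 2] t M by (intro mult_right_mono) auto
    also have "\<dots> = Q * M2sq \<mu>"
      unfolding Q_def by (simp add: mult_ac)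
    finally have I3: "2 * (norm m2)\<^sup>2 * (t * \<rho>1\<^sup>2) * D1 * (D0 * M2sq \<mu>) \<le> Q * M2sq \<mu>" .
    have "0 \<le> Q * M2barsq \<mu> / D1" "0 \<le> Q * M2sq \<mu>" unfolding Q_def using t M D by simp_all
    with I1 I2 I3 show "2 * (t * \<rho>2\<^sup>2) * D2 * ((\<integral>x. (norm (x v* m1))\<^sup>2 \<partial>\<mu>) + t * \<rho>1\<^sup>2 * D1 * (D0 * M2sq \<mu>))
        + 2 * (norm m2)\<^sup>2 * (t * \<rho>1\<^sup>2) * D1 * (D0 * M2sq \<mu>)
      \<le> t * (3 * B1\<^sup>2 * B2\<^sup>2 * (M2sq \<mu> + M2barsq \<mu> / real CARD('d1))) / 2"
      unfolding Q_def D1_def[symmetric] by (simp add: algebra_simps add_divide_distrib)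
  qed
  finally show ?thesis .
qed

lemma oracle_inequality_at_center:
  fixes \<sigma> :: "real \<Rightarrow> real" and X :: "(real^'d0) set" and \<mu> :: "(real^'d0) measure"
    and P :: "'z measure" and fhat :: "'z \<Rightarrow> real^'d0 \<Rightarrow> real^'d2" and fP :: "real^'d0 \<Rightarrow> real^'d2"
    and \<rho>1 \<rho>2 \<beta> C E :: real and n :: nat and m1 :: "real^'d1^'d0" and m2 :: "real^'d2^'d1"
  defines "d \<equiv> real (CARD('d0) * CARD('d1) + CARD('d1) * CARD('d2))"
  assumes lip: "\<And>u u'. \<bar>\<sigma> u - \<sigma> u'\<bar> \<le> \<bar>u - u'\<bar>"
    and mu_sets: "sets \<mu> = sets (restrict_space borel X)" and mu_sf: "sigma_finite_measure \<mu>"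
    and rho: "0 < \<rho>1" "0 < \<rho>2" and beta: "0 < \<beta>" and C: "0 < C" and n: "0 < n"
    and fP: "in_L2 \<mu> fP" and pb: "pac_bayes_bound P \<mu> X \<sigma> fhat fP (gauss_prior \<rho>1 \<rho>2 :: ((real^'d1^'d0) \<times> (real^'d2^'d1)) measure) \<beta> n C"
    and m1: "norm m1 \<le> \<rho>1 * sqrt (2 * real CARD('d0) * real CARD('d1))"
    and m2: "norm m2 \<le> \<rho>2 * sqrt (2 * real CARD('d1) * real CARD('d2))"
    and E: "0 \<le> E" and fnet_L2: "L2sq \<mu> (fnet \<sigma> (m1, m2)) < \<infinity>"
    and deviation: "\<And>t. 0 < t \<Longrightarrow> t \<le> 1 \<Longrightarrow>
      (\<integral>\<^sup>+x. \<integral>\<^sup>+w. ennreal ((norm (fnet \<sigma> w x - fnet \<sigma> (m1, m2) x))\<^sup>2)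
        \<partial>(iso_normal m1 (sqrt t * \<rho>1) \<Otimes>\<^sub>M iso_normal m2 (sqrt t * \<rho>2)) \<partial>\<mu>) \<le> ennreal (t * E / 2)"
  shows "risk P \<mu> fhat fP < \<infinity> \<and>
    sqrt (enn2real (risk P \<mu> fhat fP) / C)
      \<le> L2norm \<mu> (\<lambda>x. fnet \<sigma> (m1, m2) x - fP x) + sqrt (\<beta> * d / real n * ln (3 + real n * E / (d * \<beta>)))"
proof -
  have c: "continuous_on UNIV \<sigma>" by (rule continuous_on_nonexpansive[OF lip])
  have fP_meas: "fP \<in> borel_measurable \<mu>" using fP by (simp add: in_L2_def)
  have d: "0 < d" unfolding d_def by (auto intro!: add_pos_pos mult_pos_pos)
  define a where "a = L2norm \<mu> (\<lambda>x. fnet \<sigma> (m1, m2) x - fP x)"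
  have "L2sq \<mu> (\<lambda>x. fnet \<sigma> (m1, m2) x - fP x) < \<infinity>"
    using fP fnet_L2 by (intro L2sq_diff_finite borel_measurable_fnet[OF mu_sets c] fP_meas) (auto simp: in_L2_def)
  then have a: "0 \<le> a" "L2sq \<mu> (\<lambda>x. fnet \<sigma> (m1, m2) x - fP x) = ennreal (a\<^sup>2)"
    unfolding a_def L2norm_def by (simp_all add: ennreal_enn2real_if less_top[symmetric])
  define A where "A = real n * E / (d * \<beta>)"
  have A: "0 \<le> A" unfolding A_def using E d beta by simp
  \<comment> \<open>this scale balances the variance term \<open>t * E / 2\<close> against the KL term\<close>
  define t where "t = 1 / (1 + A)"
  have t: "0 < t" "t \<le> 1" unfolding t_def using A by auto
  define p where "p = iso_normal m1 (sqrt t * \<rho>1) \<Otimes>\<^sub>M iso_normal m2 (sqrt t * \<rho>2)"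
  have "prob_space p" unfolding p_def using rho t by (simp add: prob_space_pair_iso_normal)
  moreover have "sets p = sets borel" unfolding p_def by (rule sets_pair_iso_normal)
  ultimately have p: "prob_space p" "sets p = sets borel" by blast+
  define R where "R = (\<integral>\<^sup>+w. L2sq \<mu> (\<lambda>x. fnet \<sigma> w x - fP x) \<partial>p)"
  have R_le: "R \<le> ennreal ((1 + l) * a\<^sup>2 + (1 + 1 / l) * (t * E / 2))" if l: "0 < l" for l
  proof -
    have "R \<le> ennreal (1 + 1 / l) * (\<integral>\<^sup>+x. \<integral>\<^sup>+w. ennreal ((norm (fnet \<sigma> w x - fnet \<sigma> (m1, m2) x))\<^sup>2) \<partial>p \<partial>\<mu>)
        + ennreal (1 + l) * ennreal (a\<^sup>2)"
      using nn_integral_L2sq_fnet_young[OF c p mu_sets mu_sf fP_meas l, of "(m1, m2)"]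
      unfolding R_def a(2) .
    also have "\<dots> \<le> ennreal (1 + 1 / l) * ennreal (t * E / 2) + ennreal (1 + l) * ennreal (a\<^sup>2)"
      unfolding p_def by (intro add_right_mono mult_left_mono deviation t) simp
    finally show ?thesis
      using l t E by (simp add: ennreal_mult[symmetric] ennreal_plus[symmetric] add.commute del: ennreal_plus)
  qed
  have "R < \<infinity>"
    by (simp only: infinity_ennreal_def) (rule le_less_trans[OF R_le[OF zero_less_one] ennreal_less_top])
  then have R_fin: "ennreal (enn2real R) = R"
    by (intro ennreal_enn2real) (metis infinity_ennreal_def less_irrefl)
  define K where "K = \<beta> / real n * (d * ((t + 1 - ln t) / 2))"
  have K: "0 < K"
    using t beta n d ln_le_minus_one[of t] unfolding K_def by (intro mult_pos_pos divide_pos_pos) auto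
  have "risk P \<mu> fhat fP \<le> ennreal C * (R + ennreal K)"
    using risk_le_gauss_posterior[OF lip rho t _ m1 m2 pb] beta
    unfolding R_def p_def K_def d_def by simp
  also have "\<dots> = ennreal C * (ennreal (enn2real R) + ennreal K)"
    by (simp only: R_fin)
  also have "\<dots> = ennreal (C * (enn2real R + K))"
    using C K by (simp add: ennreal_mult[symmetric] ennreal_plus[symmetric] del: ennreal_plus)
  finally have risk: "risk P \<mu> fhat fP \<le> ennreal (C * (enn2real R + K))" .
  have VKT: "t * E / 2 + K < \<beta> * d / real n * ln (3 + real n * E / (d * \<beta>))"
    using gauss_posterior_budget_lt[OF beta d n E] unfolding K_def t_def A_def .
  have R_real: "enn2real R \<le> (1 + l) * a\<^sup>2 + (1 + 1 / l) * (t * E / 2)" if l: "0 < l" for l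
  proof -
    have "0 \<le> (1 + l) * a\<^sup>2 + (1 + 1 / l) * (t * E / 2)"
      using l t E by (intro add_nonneg_nonneg mult_nonneg_nonneg) auto
    then show ?thesis
      using enn2real_mono[OF R_le[OF l] ennreal_less_top] by simp
  qed
  have risk_real: "enn2real (risk P \<mu> fhat fP) \<le> C * (enn2real R + K)"
    using risk C K by (intro enn2real_leI) auto
  have "sqrt (enn2real (risk P \<mu> fhat fP) / C) \<le> a + sqrt (\<beta> * d / real n * ln (3 + real n * E / (d * \<beta>)))"
    using t E by (intro sqrt_div_le_of_young_bound[OF C risk_real a(1) _ K VKT R_real]) auto
  moreover have "risk P \<mu> fhat fP < \<infinity>"
    by (simp only: infinity_ennreal_def) (rule le_less_trans[OF risk ennreal_less_top])
  ultimately show ?thesis unfolding a_def by simp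
qed

lemma oracle_inequality:
  fixes \<sigma> :: "real \<Rightarrow> real" and X :: "(real^'d0) set" and \<mu> :: "(real^'d0) measure"
    and P :: "'z measure" and fhat :: "'z \<Rightarrow> real^'d0 \<Rightarrow> real^'d2" and fP :: "real^'d0 \<Rightarrow> real^'d2"
    and \<rho>1 \<rho>2 \<beta> C E :: real and n :: nat
  defines "d \<equiv> real (CARD('d0) * CARD('d1) + CARD('d1) * CARD('d2))"
    and "B1 \<equiv> \<rho>1 * sqrt (2 * real CARD('d0) * real CARD('d1))"
    and "B2 \<equiv> \<rho>2 * sqrt (2 * real CARD('d1) * real CARD('d2))"
  assumes lip: "\<And>u u'. \<bar>\<sigma> u - \<sigma> u'\<bar> \<le> \<bar>u - u'\<bar>"
    and mu_sets: "sets \<mu> = sets (restrict_space borel X)" and mu_sf: "sigma_finite_measure \<mu>"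
    and rho: "0 < \<rho>1" "0 < \<rho>2" and beta: "0 < \<beta>" and C: "0 < C" and n: "0 < n"
    and fP: "in_L2 \<mu> fP"
    and pb: "pac_bayes_bound P \<mu> X \<sigma> fhat fP (gauss_prior \<rho>1 \<rho>2 :: ((real^'d1^'d0) \<times> (real^'d2^'d1)) measure) \<beta> n C"
    and E: "0 \<le> E" and fnet_L2: "\<And>w :: (real^'d1^'d0) \<times> (real^'d2^'d1). L2sq \<mu> (fnet \<sigma> w) < \<infinity>"
    and deviation: "\<And>(m1 :: real^'d1^'d0) (m2 :: real^'d2^'d1) t. norm m1 \<le> B1 \<Longrightarrow> norm m2 \<le> B2 \<Longrightarrow> 0 < t \<Longrightarrow> t \<le> 1 \<Longrightarrow>
      (\<integral>\<^sup>+x. \<integral>\<^sup>+w. ennreal ((norm (fnet \<sigma> w x - fnet \<sigma> (m1, m2) x))\<^sup>2)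
        \<partial>(iso_normal m1 (sqrt t * \<rho>1) \<Otimes>\<^sub>M iso_normal m2 (sqrt t * \<rho>2)) \<partial>\<mu>) \<le> ennreal (t * E / 2)"
  shows "risk P \<mu> fhat fP < \<infinity> \<and>
    sqrt (enn2real (risk P \<mu> fhat fP) / C)
      \<le> (INF w \<in> {w :: (real^'d1^'d0) \<times> (real^'d2^'d1). norm (fst w) \<le> B1 \<and> norm (snd w) \<le> B2}.
            L2norm \<mu> (\<lambda>x. fnet \<sigma> w x - fP x))
        + sqrt (\<beta> * d / real n * ln (3 + real n * E / (d * \<beta>)))"
proof -
  define S where "S = {w :: (real^'d1^'d0) \<times> (real^'d2^'d1). norm (fst w) \<le> B1 \<and> norm (snd w) \<le> B2}"
  have "(0, 0) \<in> S" unfolding S_def B1_def B2_def using rho by simp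
  then have S: "S \<noteq> {}" by blast
  have at_center: "risk P \<mu> fhat fP < \<infinity> \<and>
      sqrt (enn2real (risk P \<mu> fhat fP) / C) \<le> L2norm \<mu> (\<lambda>x. fnet \<sigma> w x - fP x)
        + sqrt (\<beta> * d / real n * ln (3 + real n * E / (d * \<beta>)))" if "w \<in> S" for w
  proof -
    have w: "norm (fst w) \<le> B1" "norm (snd w) \<le> B2" using that unfolding S_def by simp_all
    show ?thesis
      using oracle_inequality_at_center[OF lip mu_sets mu_sf rho beta C n fP pb w[unfolded B1_def B2_def]
          E fnet_L2 deviation[OF w]]
      unfolding d_def by simp
  qed
  have "risk P \<mu> fhat fP < \<infinity>" using at_center S by blast
  moreover have "sqrt (enn2real (risk P \<mu> fhat fP) / C) \<le> (INF w\<in>S. L2norm \<mu> (\<lambda>x. fnet \<sigma> w x - fP x))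
      + sqrt (\<beta> * d / real n * ln (3 + real n * E / (d * \<beta>)))"
    using at_center by (intro le_INF_plus[OF S]) blast
  ultimately show ?thesis unfolding S_def by blast
qed

theorem theorem1:
  fixes \<sigma> :: "real \<Rightarrow> real"
    and X :: "(real^'d0) set"
    and \<mu> :: "(real^'d0) measure"
    and P :: "'z measure"
    and fhat :: "'z \<Rightarrow> real^'d0 \<Rightarrow> real^'d2"
    and fP :: "real^'d0 \<Rightarrow> real^'d2"
    and \<rho>1 \<rho>2 \<beta> C :: real
    and n :: nat
  defines "\<pi> \<equiv> (gauss_prior \<rho>1 \<rho>2 :: ((real^'d1^'d0) \<times> (real^'d2^'d1)) measure)"
    and "B1 \<equiv> \<rho>1 * sqrt (2 * real CARD('d0) * real CARD('d1))"
    and "B2 \<equiv> \<rho>2 * sqrt (2 * real CARD('d1) * real CARD('d2))"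
    and "d \<equiv> real (CARD('d0) * CARD('d1) + CARD('d1) * CARD('d2))"
  assumes lip: "\<And>u u'. \<bar>\<sigma> u - \<sigma> u'\<bar> \<le> \<bar>u - u'\<bar>"
    and X: "X \<in> sets borel"
    and mu_sets: "sets \<mu> = sets (restrict_space borel X)"
    and mu_sf: "sigma_finite_measure \<mu>"
    and M2: "integrable \<mu> (\<lambda>x. (norm x)\<^sup>2)"
    and rho: "\<rho>1 > 0" "\<rho>2 > 0"
    and beta: "\<beta> > 0" and Cpos: "C > 0" and n: "n > 0"
    and P: "prob_space P"
    and fhat_meas: "(\<lambda>(z, x). fhat z x) \<in> borel_measurable (P \<Otimes>\<^sub>M \<mu>)"
    and fhat_L2: "\<And>z. z \<in> space P \<Longrightarrow> in_L2 \<mu> (fhat z)"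
    and fP: "in_L2 \<mu> fP"
    and pb: "pac_bayes_bound P \<mu> X \<sigma> fhat fP \<pi> \<beta> n C"
  shows
    "(\<forall>M\<sigma>. (\<forall>u. \<bar>\<sigma> u\<bar> \<le> M\<sigma>) \<longrightarrow> emeasure \<mu> X < \<infinity> \<longrightarrow>
       (let E = 3 * B2\<^sup>2 * (B1\<^sup>2 * M2sq \<mu> + measure \<mu> X * M\<sigma>\<^sup>2) in
        risk P \<mu> fhat fP < \<infinity> \<and>
        sqrt (enn2real (risk P \<mu> fhat fP) / C)
          \<le> (INF w \<in> {w :: (real^'d1^'d0) \<times> (real^'d2^'d1). norm (fst w) \<le> B1 \<and> norm (snd w) \<le> B2}.
                L2norm \<mu> (\<lambda>x. fnet \<sigma> w x - fP x))
            + sqrt (\<beta> * d / real n * ln (3 + real n * E / (d * \<beta>)))))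
   \<and> ((\<not> bounded (range \<sigma>) \<and> \<sigma> 0 = 0) \<longrightarrow>
       (let E = 3 * B1\<^sup>2 * B2\<^sup>2 * (M2sq \<mu> + M2barsq \<mu> / real CARD('d1)) in
        risk P \<mu> fhat fP < \<infinity> \<and>
        sqrt (enn2real (risk P \<mu> fhat fP) / C)
          \<le> (INF w \<in> {w :: (real^'d1^'d0) \<times> (real^'d2^'d1). norm (fst w) \<le> B1 \<and> norm (snd w) \<le> B2}.
                L2norm \<mu> (\<lambda>x. fnet \<sigma> w x - fP x))
            + sqrt (\<beta> * d / real n * ln (3 + real n * E / (d * \<beta>)))))"
proof -
  note risk_bound = oracle_inequality[OF lip mu_sets mu_sf rho beta Cpos n fP pb[unfolded \<pi>_def]]
  show ?thesis
    unfolding Let_def d_def B1_def B2_def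
    apply (rule conjI)
    subgoal
      using M2sq_nonneg[of \<mu>]
      by (intro allI impI risk_bound L2sq_fnet_finite_bounded[OF _ mu_sets]
          nn_integral_posterior_deviation_le_bounded[OF lip _ mu_sets _ M2 rho]) auto
    subgoal
      using M2sq_nonneg[of \<mu>] M2barsq_nonneg[of \<mu>]
      by (intro impI risk_bound L2sq_fnet_finite_zero[OF lip _ M2]
          nn_integral_posterior_deviation_le_zero[OF lip _ mu_sets M2 rho]) auto
    done
qed

end
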